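(* Assume $\sum_{k=1}^{\infty}\|\mathbb{E}_0(S_k)\|/k^{3/2}<\infty$. For $k\in\mathbb{Z}$ and $m\ge1$ let $Y_k^m=\frac{1}{m}\mathbb{E}_k(X_{k+1}+\dots+X_{k+m})$. Then there is a constant $C>0$ such that for every $n\ge1$ and every $m\ge1$ $$\frac{1}{n^{1/2}}\Big\|\max_{1\le j\le n}\Big|\sum_{k=0}^{j-1}Y_k^m\Big|\Big\|\le C\sum_{k=m+1}^{\infty}\frac{\|\mathbb{E}_0(S_k)\|}{k^{3/2}}$$ and $$\|Y_0^m\|_+\le C\sum_{k\ge m}\frac{\|\mathbb{E}_0(S_k)\|}{k^{3/2}} .$$
   Context: Let $(\Omega,\mathcal{F},\mathbb{P})$ be a probability space and let $T:\Omega\to\Omega$ be a bijective, bimeasurable, measure-preserving transformation. Let $\mathcal{F}_0\subseteq\mathcal{F}$ be a $\sigma$-algebra with $\mathcal{F}_0\subseteq T^{-1}(\mathcal{F}_0)$, and set $\mathcal{F}_i=T^{-i}(\mathcal{F}_0)$ for $i\in\mathbb{Z}$. Let $X_0$ be $\mathcal{F}_0$-measurable with $\mathbb{E}X_0=0$ and $\mathbb{E}X_0^2<\infty$. Put $X_i=X_0\circ T^i$ and $S_n=\sum_{i=0}^{n-1}X_i$. Write $\mathbb{E}_k(\cdot)=\mathbb{E}(\cdot\mid\mathcal{F}_k)$ and let $\|\cdot\|$ be the $\mathbb{L}^2$ norm. For a stationary sequence $(V_k)_{k\in\mathbb{Z}}$ of square integrable random variables let $\|V_0\|_+^2=\limsup_{n\to\infty}\frac1n\mathbb{E}\big((V_0+\dots+V_{n-1})^2\big)$;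 here $V_k=Y_k^m=Y_0^m\circ T^k$. *)

theory Defs
  imports "HOL-Probability.Probability"
begin

definition Tpow :: "'a measure \<Rightarrow> ('a \<Rightarrow> 'a) \<Rightarrow> int \<Rightarrow> 'a \<Rightarrow> 'a" where
  "Tpow M T i = (if 0 \<le> i then T ^^ nat i else inv_into (space M) T ^^ nat (- i))"

definition filt :: "'a measure \<Rightarrow> ('a \<Rightarrow> 'a) \<Rightarrow> 'a measure \<Rightarrow> int \<Rightarrow> 'a measure" where
  "filt M T F0 i = vimage_algebra (space M) (Tpow M T i) F0"

definition Xs :: "'a measure \<Rightarrow> ('a \<Rightarrow> 'a) \<Rightarrow> ('a \<Rightarrow> real) \<Rightarrow> int \<Rightarrow> 'a \<Rightarrow> real" where
  "Xs M T X0 i = (\<lambda>x. X0 (Tpow M T i x))"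

definition Ssum :: "'a measure \<Rightarrow> ('a \<Rightarrow> 'a) \<Rightarrow> ('a \<Rightarrow> real) \<Rightarrow> nat \<Rightarrow> 'a \<Rightarrow> real" where
  "Ssum M T X0 n = (\<lambda>x. \<Sum>i<n. Xs M T X0 (int i) x)"

definition condE :: "'a measure \<Rightarrow> ('a \<Rightarrow> 'a) \<Rightarrow> 'a measure \<Rightarrow> int \<Rightarrow> ('a \<Rightarrow> real) \<Rightarrow> 'a \<Rightarrow> real" where
  "condE M T F0 k f = real_cond_exp M (filt M T F0 k) f"

definition L2norm :: "'a measure \<Rightarrow> ('a \<Rightarrow> real) \<Rightarrow> real" where
  "L2norm M f = sqrt (integral\<^sup>L M (\<lambda>x. (f x)^2))"

definition Ym :: "'a measure \<Rightarrow> ('a \<Rightarrow> 'a) \<Rightarrow> 'a measure \<Rightarrow> ('a \<Rightarrow> real) \<Rightarrow> int \<Rightarrow> nat \<Rightarrow> 'a \<Rightarrow> real" where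
  "Ym M T F0 X0 k m = (\<lambda>x. (1 / real m) *
      condE M T F0 k (\<lambda>y. \<Sum>i\<in>{1..m}. Xs M T X0 (k + int i) y) x)"

definition plus_norm :: "'a measure \<Rightarrow> (nat \<Rightarrow> 'a \<Rightarrow> real) \<Rightarrow> ereal" where
  "plus_norm M V = (let L = limsup (\<lambda>n. ereal (integral\<^sup>L M (\<lambda>x. (\<Sum>k<n. V k x)^2) / real n))
     in if L = \<infinity> then \<infinity> else ereal (sqrt (real_of_ereal L)))"

definition acoef :: "'a measure \<Rightarrow> ('a \<Rightarrow> 'a) \<Rightarrow> 'a measure \<Rightarrow> ('a \<Rightarrow> real) \<Rightarrow> nat \<Rightarrow> real" where
  "acoef M T F0 X0 k = L2norm M (condE M T F0 0 (Ssum M T X0 k)) / real k powr (3/2)"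

end

theory Submission
  imports Defs
begin

text \<open>The maximal inequality is proved by a dyadic induction in the spirit of Peligrad and Utev.
  For a stationary sequence \<open>Z \<circ> T^i\<close> with \<open>Z\<close> measurable for \<open>F0\<close>, each block \<open>Z + Z \<circ> T\<close> splits
  into its predictable part \<open>E\<^sub>0(Z + Z \<circ> T)\<close> and a martingale difference for the filtration
  \<open>F\<^sub>2\<^sub>i\<close>.  Doob's \<open>L\<^sup>2\<close> inequality bounds the maximum of the martingale part by \<open>\<surd>N \<parallel>Z\<parallel>\<close>, while
  the predictable parts form a stationary sequence for \<open>T\<^sup>2\<close> whose partial sums have the same
  conditional expectation given \<open>F0\<close> as the original ones at even times.  Iterating over the
  scales \<open>2^r\<close> bounds \<open>\<parallel>max\<^sub>j\<^sub>\<le>\<^sub>2\<^sub>^\<^sub>r |S\<^sub>j|\<parallel>\<close> by a weighted sum of the norms \<open>\<parallel>E\<^sub>0 S\<^sub>2\<^sub>^\<^sub>l\<parallel>\<close>.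

  For the sequence \<open>Y\<^sub>k\<^sup>m = Y\<^sub>0\<^sup>m \<circ> T^k\<close> these norms are bounded through \<open>a\<^sub>k = \<parallel>E\<^sub>0 S\<^sub>k\<parallel>\<close> in two
  ways, one suited to block lengths below \<open>m\<close> and one to lengths above \<open>m\<close>.  Stationarity and
  the tower property make \<open>a\<close> subadditive, \<open>a\<^sub>j \<le> a\<^sub>k + a\<^sub>k\<^sub>-\<^sub>j\<close>, which turns both bounds into tails
  of \<open>\<Sum> a\<^sub>k / k\<^sup>3\<^sup>/\<^sup>2\<close>.  Finally \<open>\<parallel>Y\<^sub>0\<^sup>m\<parallel>\<^sub>+\<close> is controlled because each partial sum is dominated
  by the maximal one.\<close>


section \<open>Square integrable functions\<close>

definition square_integrable :: "'a measure \<Rightarrow> ('a \<Rightarrow> real) \<Rightarrow> bool" where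
  "square_integrable M f \<longleftrightarrow> f \<in> borel_measurable M \<and> integrable M (\<lambda>x. (f x)^2)"

lemma square_integrable_measurable [measurable_dest]:
  "square_integrable M f \<Longrightarrow> f \<in> borel_measurable M"
  by (simp add: square_integrable_def)

lemma (in finite_measure) square_integrable_integrable:
  "square_integrable M f \<Longrightarrow> integrable M f"
  by (rule square_integrable_imp_integrable) (auto simp: square_integrable_def)

lemma integrable_mult_square_integrable:
  assumes "square_integrable M f" "square_integrable M g"
  shows "integrable M (\<lambda>x. f x * g x)"
proof (rule Bochner_Integration.integrable_bound[of _ "\<lambda>x. (f x)^2 + (g x)^2"])
  show "integrable M (\<lambda>x. (f x)\<^sup>2 + (g x)\<^sup>2)" "(\<lambda>x. f x * g x) \<in> borel_measurable M"
    using assms by (auto simp: square_integrable_def)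
  have "\<bar>a * b\<bar> \<le> a^2 + b^2" for a b :: real
  proof -
    have "0 \<le> \<bar>a\<bar> * \<bar>b\<bar>" by simp
    then show ?thesis using sum_squares_bound[of "\<bar>a\<bar>" "\<bar>b\<bar>"] by (simp only: abs_mult power2_abs mult.assoc)
  qed
  then show "AE x in M. norm (f x * g x) \<le> norm ((f x)\<^sup>2 + (g x)\<^sup>2)" by auto
qed

lemma square_integrable_bound:
  assumes "square_integrable M g" "f \<in> borel_measurable M" "AE x in M. \<bar>f x\<bar> \<le> \<bar>g x\<bar>"
  shows "square_integrable M f"
  unfolding square_integrable_def
proof (intro conjI)
  show "integrable M (\<lambda>x. (f x)\<^sup>2)"
  proof (rule Bochner_Integration.integrable_bound[of _ "\<lambda>x. (g x)^2"])
    show "AE x in M. norm ((f x)\<^sup>2) \<le> norm ((g x)\<^sup>2)"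
      using assms(3) by eventually_elim (simp add: abs_le_square_iff)
  qed (use assms in \<open>auto simp: square_integrable_def\<close>)
qed (fact assms)

lemma square_integrable_add [intro]:
  assumes "square_integrable M f" "square_integrable M g"
  shows "square_integrable M (\<lambda>x. f x + g x)"
proof -
  have "integrable M (\<lambda>x. (f x)^2 + 2 * (f x * g x) + (g x)^2)"
    using assms integrable_mult_square_integrable[OF assms] by (auto simp: square_integrable_def)
  moreover have "(\<lambda>x. f x + g x) \<in> borel_measurable M"
    using assms by auto
  ultimately show ?thesis
    by (simp add: square_integrable_def power2_sum algebra_simps)
qed

lemma square_integrable_cmult [intro]:
  "square_integrable M f \<Longrightarrow> square_integrable M (\<lambda>x. c * f x)"
  by (auto simp: square_integrable_def power_mult_distrib)

lemma square_integrable_diff [intro]: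
  assumes "square_integrable M f" "square_integrable M g"
  shows "square_integrable M (\<lambda>x. f x - g x)"
  using square_integrable_add[OF assms(1) square_integrable_cmult[OF assms(2), of "-1"]] by simp

lemma square_integrable_sum [intro]:
  "(\<And>i. i \<in> I \<Longrightarrow> square_integrable M (f i)) \<Longrightarrow> square_integrable M (\<lambda>x. \<Sum>i\<in>I. f i x)"
proof (induction I rule: infinite_finite_induct)
  case (insert a F)
  then show ?case by (simp add: square_integrable_add)
qed (auto simp: square_integrable_def)

lemma square_integrable_abs [intro]:
  "square_integrable M f \<Longrightarrow> square_integrable M (\<lambda>x. \<bar>f x\<bar>)"
  by (rule square_integrable_bound) auto

lemma square_integrable_Max_abs:
  assumes "finite I" "I \<noteq> {}" "\<And>k. k \<in> I \<Longrightarrow> square_integrable M (f k)"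
  shows "square_integrable M (\<lambda>x. Max ((\<lambda>k. \<bar>f k x\<bar>) ` I))"
proof (rule square_integrable_bound[of _ "\<lambda>x. \<Sum>k\<in>I. \<bar>f k x\<bar>"])
  show "square_integrable M (\<lambda>x. \<Sum>k\<in>I. \<bar>f k x\<bar>)"
    using assms by (intro square_integrable_sum square_integrable_abs)
  show "(\<lambda>x. Max ((\<lambda>k. \<bar>f k x\<bar>) ` I)) \<in> borel_measurable M"
    using assms by (intro borel_measurable_Max borel_measurable_abs) auto
  show "AE x in M. \<bar>Max ((\<lambda>k. \<bar>f k x\<bar>) ` I)\<bar> \<le> \<bar>\<Sum>k\<in>I. \<bar>f k x\<bar>\<bar>"
  proof (rule AE_I2)
    fix x
    obtain k0 where "k0 \<in> I" using assms(2) by auto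
    then have "0 \<le> Max ((\<lambda>k. \<bar>f k x\<bar>) ` I)"
      using assms(1) by (meson Max_ge abs_ge_zero finite_imageI imageI order_trans)
    moreover have "Max ((\<lambda>k. \<bar>f k x\<bar>) ` I) \<le> (\<Sum>k\<in>I. \<bar>f k x\<bar>)"
      using assms(1,2) by (intro Max.boundedI) (auto intro!: member_le_sum)
    ultimately show "\<bar>Max ((\<lambda>k. \<bar>f k x\<bar>) ` I)\<bar> \<le> \<bar>\<Sum>k\<in>I. \<bar>f k x\<bar>\<bar>" by simp
  qed
qed

lemma L2norm_nonneg [simp]: "0 \<le> L2norm M f"
  by (simp add: L2norm_def)

lemma L2norm_power2: "(L2norm M f)^2 = integral\<^sup>L M (\<lambda>x. (f x)^2)"
  by (simp add: L2norm_def)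

lemma L2norm_cong_AE:
  assumes "AE x in M. f x = g x" "f \<in> borel_measurable M" "g \<in> borel_measurable M"
  shows "L2norm M f = L2norm M g"
proof -
  have "integral\<^sup>L M (\<lambda>x. (f x)^2) = integral\<^sup>L M (\<lambda>x. (g x)^2)"
    by (rule integral_cong_AE) (use assms in auto)
  then show ?thesis by (simp add: L2norm_def)
qed

lemma L2norm_cmult: "L2norm M (\<lambda>x. c * f x) = \<bar>c\<bar> * L2norm M f"
  by (simp add: L2norm_def power_mult_distrib real_sqrt_mult)

lemma discriminant_le_of_nonneg:
  fixes A B C :: real
  assumes "\<And>t. 0 \<le> A + 2 * t * B + t^2 * C" "0 \<le> C"
  shows "B^2 \<le> A * C"
proof (cases "C = 0")
  case True
  have "B = 0"
  proof (rule ccontr)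
    assume "B \<noteq> 0"
    define t where "t = - (\<bar>A\<bar> + 1) / B / 2"
    have "0 \<le> A + 2 * t * B" using assms(1)[of t] True by simp
    moreover have "2 * t * B = - (\<bar>A\<bar> + 1)" using \<open>B \<noteq> 0\<close> by (simp add: t_def field_simps)
    ultimately show False by linarith
  qed
  then show ?thesis using True by simp
next
  case False
  then have "C > 0" using assms(2) by simp
  have "0 \<le> A + 2 * (-B/C) * B + (-B/C)^2 * C" by (rule assms(1))
  also have "\<dots> = A - B^2 / C" using \<open>C > 0\<close> by (simp add: field_simps power2_eq_square)
  finally show ?thesis using \<open>C > 0\<close> by (simp add: field_simps)
qed

lemma integral_mult_le_L2norm:
  assumes "square_integrable M f" "square_integrable M g"
  shows "\<bar>integral\<^sup>L M (\<lambda>x. f x * g x)\<bar> \<le> L2norm M f * L2norm M g"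
proof -
  let ?A = "integral\<^sup>L M (\<lambda>x. (f x)^2)" and ?B = "integral\<^sup>L M (\<lambda>x. f x * g x)"
    and ?C = "integral\<^sup>L M (\<lambda>x. (g x)^2)"
  have "0 \<le> ?A + 2 * t * ?B + t^2 * ?C" for t
  proof -
    have "0 \<le> integral\<^sup>L M (\<lambda>x. (f x + t * g x)^2)" by simp
    also have "\<dots> = integral\<^sup>L M (\<lambda>x. (f x)^2 + (2 * t) * (f x * g x) + t^2 * (g x)^2)"
      by (simp add: power2_sum power_mult_distrib algebra_simps)
    also have "\<dots> = ?A + 2 * t * ?B + t^2 * ?C"
      using assms integrable_mult_square_integrable[OF assms] by (simp add: square_integrable_def)
    finally show ?thesis .
  qed
  then have "?B^2 \<le> ?A * ?C" by (rule discriminant_le_of_nonneg) simp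
  then have "\<bar>?B\<bar> \<le> sqrt (?A * ?C)" by (intro real_le_rsqrt) simp
  then show ?thesis by (simp add: L2norm_def real_sqrt_mult)
qed

lemma L2norm_add_le:
  assumes "square_integrable M f" "square_integrable M g"
  shows "L2norm M (\<lambda>x. f x + g x) \<le> L2norm M f + L2norm M g"
proof -
  have "(L2norm M (\<lambda>x. f x + g x))^2 = integral\<^sup>L M (\<lambda>x. (f x)^2 + 2 * (f x * g x) + (g x)^2)"
    by (simp add: L2norm_power2 power2_sum algebra_simps)
  also have "\<dots> = (L2norm M f)^2 + 2 * integral\<^sup>L M (\<lambda>x. f x * g x) + (L2norm M g)^2"
    using assms integrable_mult_square_integrable[OF assms]
    by (simp add: L2norm_power2 square_integrable_def)
  also have "\<dots> \<le> (L2norm M f + L2norm M g)^2"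
    using integral_mult_le_L2norm[OF assms] by (simp add: power2_sum)
  finally show ?thesis
    by (meson L2norm_nonneg add_nonneg_nonneg power2_le_imp_le)
qed

lemma L2norm_diff_le:
  assumes "square_integrable M f" "square_integrable M g"
  shows "L2norm M (\<lambda>x. f x - g x) \<le> L2norm M f + L2norm M g"
  using L2norm_add_le[OF assms(1) square_integrable_cmult[OF assms(2), of "-1"]]
  by (simp add: L2norm_def)

lemma L2norm_sum_le:
  "(\<And>i. i \<in> I \<Longrightarrow> square_integrable M (f i)) \<Longrightarrow>
    L2norm M (\<lambda>x. \<Sum>i\<in>I. f i x) \<le> (\<Sum>i\<in>I. L2norm M (f i))"
proof (induction I rule: infinite_finite_induct)
  case (insert a F)
  then have "L2norm M (\<lambda>x. f a x + (\<Sum>i\<in>F. f i x)) \<le> L2norm M (f a) + L2norm M (\<lambda>x. \<Sum>i\<in>F. f i x)"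
    by (intro L2norm_add_le) auto
  with insert show ?case by simp
qed (auto simp: L2norm_def)

lemma L2norm_mono:
  assumes "square_integrable M g" "f \<in> borel_measurable M" "AE x in M. \<bar>f x\<bar> \<le> \<bar>g x\<bar>"
  shows "L2norm M f \<le> L2norm M g"
proof -
  have "square_integrable M f" by (rule square_integrable_bound[OF assms])
  then have "integral\<^sup>L M (\<lambda>x. (f x)^2) \<le> integral\<^sup>L M (\<lambda>x. (g x)^2)"
    using assms by (intro integral_mono_AE)
      (auto simp: square_integrable_def abs_le_square_iff elim!: eventually_mono)
  then show ?thesis by (simp add: L2norm_def)
qed

lemma L2norm_sqrt_sum_power2:
  assumes "finite I" "\<And>i. i \<in> I \<Longrightarrow> square_integrable M (f i)"
  shows "L2norm M (\<lambda>x. sqrt (\<Sum>i\<in>I. (f i x)^2)) = sqrt (\<Sum>i\<in>I. (L2norm M (f i))^2)"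
proof -
  have "integral\<^sup>L M (\<lambda>x. (sqrt (\<Sum>i\<in>I. (f i x)^2))^2) = (\<Sum>i\<in>I. integral\<^sup>L M (\<lambda>x. (f i x)^2))"
    using assms by (simp add: sum_nonneg Bochner_Integration.integral_sum square_integrable_def)
  then show ?thesis by (simp add: L2norm_def)
qed


section \<open>Measure preserving maps with an invariant filtration\<close>

locale stationary_filtration =
  fixes M :: "'a measure" and T :: "'a \<Rightarrow> 'a" and F0 :: "'a measure"
  assumes prob_space_M: "prob_space M"
    and T_measurable: "T \<in> M \<rightarrow>\<^sub>M M"
    and distr_T: "distr M M T = M"
    and subalgebra_F0: "subalgebra M F0"
    and F0_subset_preimage: "sets F0 \<subseteq> sets (vimage_algebra (space M) T F0)"

sublocale stationary_filtration \<subseteq> prob_space M by (rule prob_space_M)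

context stationary_filtration
begin

definition Fk :: "nat \<Rightarrow> 'a measure" where
  "Fk k = vimage_algebra (space M) (T ^^ k) F0"

definition E :: "nat \<Rightarrow> ('a \<Rightarrow> real) \<Rightarrow> 'a \<Rightarrow> real" where
  "E k f = real_cond_exp M (Fk k) f"

lemma funpow_measurable: "T ^^ k \<in> M \<rightarrow>\<^sub>M M"
proof (induction k)
  case (Suc k)
  have "T \<circ> T ^^ k \<in> M \<rightarrow>\<^sub>M M" by (rule measurable_comp[OF Suc T_measurable])
  then show ?case by (simp only: funpow.simps)
next
  case 0
  show ?case unfolding funpow.simps(1) by (rule measurable_ident)
qed

lemma funpow_space: "x \<in> space M \<Longrightarrow> (T ^^ k) x \<in> space M"
  by (rule measurable_space[OF funpow_measurable])

lemma distr_funpow: "distr M M (T ^^ k) = M"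
proof (induction k)
  case 0 then show ?case by (simp add: distr_id2)
next
  case (Suc k)
  have "distr M M (T ^^ Suc k) = distr M M ((T ^^ k) \<circ> T)"
    by (simp only: funpow_Suc_right)
  also have "\<dots> = distr (distr M M T) M (T ^^ k)"
    by (rule distr_distr[OF funpow_measurable T_measurable, symmetric])
  also have "\<dots> = M" using Suc distr_T by simp
  finally show ?case .
qed

lemma integral_funpow:
  fixes f :: "'a \<Rightarrow> real"
  assumes "f \<in> borel_measurable M"
  shows "integral\<^sup>L M (\<lambda>x. f ((T ^^ k) x)) = integral\<^sup>L M f"
  using integral_distr[OF funpow_measurable[of k] assms] distr_funpow[of k] by simp

lemma integrable_funpow:
  fixes f :: "'a \<Rightarrow> real"
  assumes "integrable M f"
  shows "integrable M (\<lambda>x. f ((T ^^ k) x))"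
proof -
  have fm: "f \<in> borel_measurable M" using assms by auto
  have "integrable (distr M M (T ^^ k)) f" by (subst distr_funpow) (rule assms)
  then show ?thesis using integrable_distr_eq[OF funpow_measurable[of k] fm] by simp
qed

lemma AE_funpow:
  assumes "AE x in M. P x"
  shows "AE x in M. P ((T ^^ k) x)"
proof -
  have "AE x in distr M M (T ^^ k). P x" by (subst distr_funpow) (rule assms)
  then show ?thesis by (rule AE_distrD[OF funpow_measurable])
qed

lemma square_integrable_funpow:
  assumes "square_integrable M f"
  shows "square_integrable M (\<lambda>x. f ((T ^^ k) x))"
proof -
  have "integrable M (\<lambda>x. (f ((T ^^ k) x))^2)"
    using integrable_funpow[of "\<lambda>x. (f x)^2" k] assms by (simp add: square_integrable_def)
  moreover have "(\<lambda>x. f ((T ^^ k) x)) \<in> borel_measurable M"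
    using measurable_compose[OF funpow_measurable[of k], of f borel] assms by (simp add: square_integrable_def)
  ultimately show ?thesis by (simp add: square_integrable_def)
qed

lemma L2norm_funpow:
  assumes "f \<in> borel_measurable M"
  shows "L2norm M (\<lambda>x. f ((T ^^ k) x)) = L2norm M f"
  using integral_funpow[of "\<lambda>x. (f x)^2" k] assms by (simp add: L2norm_def)

lemma sets_F0_subset: "sets F0 \<subseteq> sets M" using subalgebra_F0 by (simp add: subalgebra_def)
lemma space_F0: "space F0 = space M" using subalgebra_F0 by (simp add: subalgebra_def)

lemma funpow_Pi: "T ^^ k \<in> space M \<rightarrow> space F0"
  using funpow_space space_F0 by auto

lemma sets_Fk: "sets (Fk k) = {(T ^^ k) -` A \<inter> space M | A. A \<in> sets F0}"
  unfolding Fk_def by (rule sets_vimage_algebra2[OF funpow_Pi])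

lemma space_Fk [simp]: "space (Fk k) = space M"
  by (simp add: Fk_def)

lemma subalgebra_Fk: "subalgebra M (Fk k)"
  unfolding subalgebra_def
proof
  show "sets (Fk k) \<subseteq> sets M"
  proof
    fix A assume "A \<in> sets (Fk k)"
    then obtain B where B: "B \<in> sets F0" "A = (T ^^ k) -` B \<inter> space M"
      by (auto simp: sets_Fk)
    then have "B \<in> sets M" using sets_F0_subset by auto
    then show "A \<in> sets M" using B measurable_sets[OF funpow_measurable] by auto
  qed
qed simp

lemma sets_Fk0: "sets (Fk 0) = sets F0"
proof -
  have "sets (Fk 0) = {A \<inter> space M | A. A \<in> sets F0}" by (simp add: sets_Fk)
  also have "\<dots> = sets F0"
  proof (safe)
    fix A assume "A \<in> sets F0"
    then show "A \<inter> space M \<in> sets F0" using sets.sets_into_space space_F0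
      by (metis inf.absorb1)
  next
    fix A assume "A \<in> sets F0"
    then show "\<exists>B. A = B \<inter> space M \<and> B \<in> sets F0" using sets.sets_into_space space_F0
      by (metis inf.absorb1)
  qed
  finally show ?thesis .
qed

lemma measurable_Fk0_iff: "(f :: 'a \<Rightarrow> real) \<in> borel_measurable (Fk 0) \<longleftrightarrow> f \<in> borel_measurable F0"
proof -
  have "(borel_measurable (Fk 0) :: ('a \<Rightarrow> real) set) = borel_measurable F0" by (rule measurable_cong_sets[OF sets_Fk0 refl])
  then show ?thesis by (simp only:)
qed

lemma sets_Fk_Suc: "sets (Fk k) \<subseteq> sets (Fk (Suc k))"
proof
  fix A assume "A \<in> sets (Fk k)"
  then obtain B where B: "B \<in> sets F0" "A = (T ^^ k) -` B \<inter> space M"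
    by (auto simp: sets_Fk)
  have TP: "T \<in> space M \<rightarrow> space F0" using measurable_space[OF T_measurable] space_F0 by auto
  have "B \<in> sets (vimage_algebra (space M) T F0)" using B F0_subset_preimage by blast
  then have "B \<in> {T -` A \<inter> space M | A. A \<in> sets F0}" using sets_vimage_algebra2[OF TP] by blast
  then obtain C where C: "C \<in> sets F0" "B = T -` C \<inter> space M" by blast
  have "A = (T ^^ Suc k) -` C \<inter> space M"
  proof (intro set_eqI iffI)
    fix x assume "x \<in> A"
    then show "x \<in> (T ^^ Suc k) -` C \<inter> space M" using B C by simp
  next
    fix x assume x: "x \<in> (T ^^ Suc k) -` C \<inter> space M"
    then have "(T ^^ k) x \<in> space M" using funpow_space by blast
    then show "x \<in> A" using x B C by simp
  qed
  then show "A \<in> sets (Fk (Suc k))" using C by (auto simp: sets_Fk)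
qed

lemma sets_Fk_mono: "i \<le> j \<Longrightarrow> sets (Fk i) \<subseteq> sets (Fk j)"
proof (induction j)
  case (Suc j)
  then show ?case using sets_Fk_Suc by (metis le_Suc_eq order_trans order_refl)
qed simp

lemma subalgebra_Fk_Fk: "i \<le> j \<Longrightarrow> subalgebra (Fk j) (Fk i)"
  using sets_Fk_mono[of i j] by (simp add: subalgebra_def)

lemma measurable_Fk_mono: "i \<le> j \<Longrightarrow> f \<in> borel_measurable (Fk i) \<Longrightarrow> f \<in> borel_measurable (Fk j)"
  by (rule measurable_from_subalg[OF subalgebra_Fk_Fk])

lemma measurable_Fk_funpow:
  assumes "f \<in> borel_measurable (Fk j)"
  shows "(\<lambda>x. f ((T ^^ k) x)) \<in> borel_measurable (Fk (j + k))"
proof -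
  have P: "T ^^ k \<in> space M \<rightarrow> space (Fk j)" using funpow_space by simp
  have h1: "T ^^ k \<in> measurable (vimage_algebra (space M) (T ^^ k) (Fk j)) (Fk j)"
    by (rule measurable_vimage_algebra1[OF P])
  have h2: "(\<lambda>x. f ((T ^^ k) x)) \<in> borel_measurable (vimage_algebra (space M) (T ^^ k) (Fk j))"
    by (rule measurable_compose[OF h1 assms])
  have P2: "T ^^ k \<in> space M \<rightarrow> space M" using funpow_space by simp
  have P3: "T ^^ j \<in> space M \<rightarrow> space F0" by (rule funpow_Pi)
  have "vimage_algebra (space M) (T ^^ k) (Fk j) = vimage_algebra (space M) (\<lambda>x. (T ^^ j) ((T ^^ k) x)) F0"
    unfolding Fk_def by (rule vimage_algebra_vimage_algebra_eq[OF P2 P3])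
  also have "(\<lambda>x. (T ^^ j) ((T ^^ k) x)) = T ^^ (j + k)"
    by (simp only: funpow_add comp_def)
  finally have "vimage_algebra (space M) (T ^^ k) (Fk j) = Fk (j + k)" by (simp only: Fk_def)
  then show ?thesis using h2 by simp
qed

lemma sigma_finite_subalgebra_Fk: "sigma_finite_subalgebra M (Fk k)"
proof -
  have fm: "finite_measure M" using prob_space_M by (simp add: prob_space_def)
  have "finite_measure_subalgebra M (Fk k)"
    by (rule finite_measure_subalgebra.intro[OF fm]) (simp add: finite_measure_subalgebra_axioms_def subalgebra_Fk)
  then show ?thesis by (rule finite_measure_subalgebra_is_sigma_finite)
qed

lemma E_measurable[measurable]: "E k f \<in> borel_measurable (Fk k)"
  by (simp add: E_def)

lemma E_measurable_M[measurable]: "E k f \<in> borel_measurable M"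
  by (simp add: E_def)

lemma integrable_E: "integrable M f \<Longrightarrow> integrable M (E k f)"
  unfolding E_def by (rule sigma_finite_subalgebra.real_cond_exp_int(1)[OF sigma_finite_subalgebra_Fk])

lemma integral_E: "integrable M f \<Longrightarrow> integral\<^sup>L M (E k f) = integral\<^sup>L M f"
  unfolding E_def by (rule sigma_finite_subalgebra.real_cond_exp_int(2)[OF sigma_finite_subalgebra_Fk])

lemma E_self: "integrable M f \<Longrightarrow> f \<in> borel_measurable (Fk k) \<Longrightarrow> AE x in M. E k f x = f x"
  unfolding E_def by (rule sigma_finite_subalgebra.real_cond_exp_F_meas[OF sigma_finite_subalgebra_Fk])

lemma E_tower:
  assumes "i \<le> j" "integrable M f"
  shows "AE x in M. E i (E j f) x = E i f x"
  unfolding E_def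
  by (rule sigma_finite_subalgebra.real_cond_exp_nested_subalg[OF sigma_finite_subalgebra_Fk subalgebra_Fk _ assms(2)])
    (use sets_Fk_mono[OF assms(1)] in \<open>simp add: subalgebra_def\<close>)

lemma E_add:
  assumes "integrable M f" "integrable M g"
  shows "AE x in M. E k (\<lambda>x. f x + g x) x = E k f x + E k g x"
  unfolding E_def by (rule sigma_finite_subalgebra.real_cond_exp_add[OF sigma_finite_subalgebra_Fk assms])

lemma E_diff:
  assumes "integrable M f" "integrable M g"
  shows "AE x in M. E k (\<lambda>x. f x - g x) x = E k f x - E k g x"
  unfolding E_def by (rule sigma_finite_subalgebra.real_cond_exp_diff[OF sigma_finite_subalgebra_Fk assms])

lemma E_cmult:
  assumes "integrable M f"
  shows "AE x in M. E k (\<lambda>x. c * f x) x = c * E k f x"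
  unfolding E_def by (rule sigma_finite_subalgebra.real_cond_exp_cmult[OF sigma_finite_subalgebra_Fk assms])

lemma E_sum:
  assumes "\<And>i. integrable M (f i)"
  shows "AE x in M. E k (\<lambda>x. \<Sum>i\<in>I. f i x) x = (\<Sum>i\<in>I. E k (f i) x)"
  unfolding E_def by (rule sigma_finite_subalgebra.real_cond_exp_sum[OF sigma_finite_subalgebra_Fk assms])

lemma integral_mult_E:
  assumes "integrable M (\<lambda>x. f x * g x)" "f \<in> borel_measurable (Fk k)" "g \<in> borel_measurable M"
  shows "integral\<^sup>L M (\<lambda>x. f x * E k g x) = integral\<^sup>L M (\<lambda>x. f x * g x)"
  unfolding E_def by (rule sigma_finite_subalgebra.real_cond_exp_intg(2)[OF sigma_finite_subalgebra_Fk assms])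

lemma E_cong:
  assumes "AE x in M. f x = g x" "f \<in> borel_measurable M" "g \<in> borel_measurable M"
  shows "AE x in M. E k f x = E k g x"
  unfolding E_def by (rule sigma_finite_subalgebra.real_cond_exp_cong[OF sigma_finite_subalgebra_Fk assms])

lemma square_integrable_E:
  assumes "square_integrable M f"
  shows "square_integrable M (E k f)"
  using assms unfolding E_def square_integrable_def
  by (intro conjI sigma_finite_subalgebra.integrable_convex_cond_exp[OF sigma_finite_subalgebra_Fk,
        of _ UNIV, where q = power2]) (auto simp: convex_power2 square_integrable_integrable[OF assms])

lemma L2norm_E_le:
  assumes "square_integrable M f"
  shows "L2norm M (E k f) \<le> L2norm M f"
proof -
  have f: "integrable M f" "integrable M (\<lambda>x. (f x)^2)"
    using assms by (auto simp: square_integrable_integrable square_integrable_def)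
  have "AE x in M. (E k f x)^2 \<le> E k (\<lambda>x. (f x)^2) x"
    unfolding E_def
    by (rule sigma_finite_subalgebra.real_cond_exp_jensens_inequality(2)[OF sigma_finite_subalgebra_Fk f(1),
          of UNIV, where q = power2]) (use f convex_power2 in auto)
  then have "integral\<^sup>L M (\<lambda>x. (E k f x)^2) \<le> integral\<^sup>L M (E k (\<lambda>x. (f x)^2))"
    using square_integrable_E[OF assms] f by (intro integral_mono_AE integrable_E) (auto simp: square_integrable_def)
  also have "\<dots> = integral\<^sup>L M (\<lambda>x. (f x)^2)" by (rule integral_E[OF f(2)])
  finally show ?thesis by (simp add: L2norm_def)
qed

lemma E_funpow:
  assumes "integrable M f"
  shows "AE x in M. E k (\<lambda>y. f ((T ^^ k) y)) x = E 0 f ((T ^^ k) x)"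
  unfolding E_def
proof (rule sigma_finite_subalgebra.real_cond_exp_charact[OF sigma_finite_subalgebra_Fk])
  show "integrable M (\<lambda>y. f ((T ^^ k) y))" by (rule integrable_funpow[OF assms])
  show "integrable M (\<lambda>x. real_cond_exp M (Fk 0) f ((T ^^ k) x))"
    by (rule integrable_funpow[OF integrable_E[OF assms, unfolded E_def]])
  show "(\<lambda>x. real_cond_exp M (Fk 0) f ((T ^^ k) x)) \<in> borel_measurable (Fk k)"
    using measurable_Fk_funpow[of "real_cond_exp M (Fk 0) f" 0 k] by simp
  fix A assume "A \<in> sets (Fk k)"
  then obtain B where B: "B \<in> sets F0" "A = (T ^^ k) -` B \<inter> space M"
    by (auto simp: sets_Fk)
  have BM: "B \<in> sets M" using B sets_F0_subset by auto
  have B0: "B \<in> sets (Fk 0)" using B sets_Fk0 by auto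
  have ind: "\<And>x. x \<in> space M \<Longrightarrow> indicator A x = (indicator B ((T ^^ k) x) :: real)"
    using B by (auto simp: indicator_def)
  have fm: "f \<in> borel_measurable M" using assms by auto
  have "(\<integral>x\<in>A. f ((T ^^ k) x) \<partial>M) = (\<integral>x. indicator B ((T ^^ k) x) * f ((T ^^ k) x) \<partial>M)"
    unfolding set_lebesgue_integral_def by (intro Bochner_Integration.integral_cong) (auto simp: ind)
  also have "\<dots> = (\<integral>x. indicator B x * f x \<partial>M)"
    by (rule integral_funpow[of "\<lambda>x. indicator B x * f x"]) (use BM fm in auto)
  also have "\<dots> = (\<integral>x\<in>B. real_cond_exp M (Fk 0) f x \<partial>M)"
    using sigma_finite_subalgebra.real_cond_exp_intA[OF sigma_finite_subalgebra_Fk assms B0]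
    by (simp add: set_lebesgue_integral_def)
  also have "\<dots> = (\<integral>x. indicator B x * real_cond_exp M (Fk 0) f x \<partial>M)"
    by (simp add: set_lebesgue_integral_def)
  also have "\<dots> = (\<integral>x. indicator B ((T ^^ k) x) * real_cond_exp M (Fk 0) f ((T ^^ k) x) \<partial>M)"
    by (rule integral_funpow[symmetric, of "\<lambda>x. indicator B x * real_cond_exp M (Fk 0) f x"]) (use BM in auto)
  also have "\<dots> = (\<integral>x\<in>A. real_cond_exp M (Fk 0) f ((T ^^ k) x) \<partial>M)"
    unfolding set_lebesgue_integral_def by (intro Bochner_Integration.integral_cong) (auto simp: ind)
  finally show "(\<integral>x\<in>A. f ((T ^^ k) x) \<partial>M) = (\<integral>x\<in>A. real_cond_exp M (Fk 0) f ((T ^^ k) x) \<partial>M)" .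
qed

end


section \<open>Doob's maximal inequality in \<open>L\<^sup>2\<close>\<close>

lemma Max_atMost_Suc:
  fixes f :: "nat \<Rightarrow> real"
  shows "Max (f ` {..Suc n}) = max (Max (f ` {..n})) (f (Suc n))"
  by (simp add: atMost_Suc max.commute)

lemma Max_atMost_ge: "(i::nat) \<le> n \<Longrightarrow> (f i :: real) \<le> Max (f ` {..n})"
  by (intro Max_ge) auto

text \<open>The pathwise inequality behind Doob's \<open>L\<^sup>2\<close> maximal inequality.\<close>

lemma sum_running_Max_mult_diff_le:
  fixes x :: "nat \<Rightarrow> real"
  defines "b \<equiv> \<lambda>s. Max (x ` {..s})"
  shows "(\<Sum>s<n. b s * (x (Suc s) - x s)) \<le> b n * x n - (b n)^2 / 2"
proof (induction n)
  case 0
  then show ?case by (simp add: b_def power2_eq_square)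
next
  case (Suc n)
  have bS: "b (Suc n) = max (b n) (x (Suc n))" by (simp add: b_def Max_atMost_Suc)
  have "(\<Sum>s<Suc n. b s * (x (Suc s) - x s)) \<le> b n * x n - (b n)^2 / 2 + b n * (x (Suc n) - x n)"
    using Suc by simp
  also have "\<dots> = b n * x (Suc n) - (b n)^2/2" by (simp add: algebra_simps)
  also have "\<dots> \<le> b (Suc n) * x (Suc n) - (b (Suc n))^2 / 2"
  proof (cases "x (Suc n) \<le> b n")
    case False
    then have "b (Suc n) = x (Suc n)" using bS by simp
    moreover have "0 \<le> (x (Suc n) - b n)^2" by simp
    ultimately show ?thesis by (simp add: power2_eq_square algebra_simps)
  qed (use bS in simp)
  finally show ?case .
qed

lemma running_Max_abs_partial_sums_power2_le:
  fixes D :: "nat \<Rightarrow> real"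
  defines "S \<equiv> \<lambda>j. \<Sum>i<j. D i"
  defines "b \<equiv> \<lambda>s. Max ((\<lambda>j. \<bar>S j\<bar>) ` {..s})"
  shows "(b n)^2 \<le> 4 * (S n)^2 - 4 * (\<Sum>s<n. (b s * sgn (S s)) * D s)"
proof -
  have "(\<Sum>s<n. b s * (\<bar>S (Suc s)\<bar> - \<bar>S s\<bar>)) \<le> b n * \<bar>S n\<bar> - (b n)^2 / 2"
    unfolding b_def by (rule sum_running_Max_mult_diff_le)
  moreover have "(\<Sum>s<n. (b s * sgn (S s)) * D s) \<le> (\<Sum>s<n. b s * (\<bar>S (Suc s)\<bar> - \<bar>S s\<bar>))"
  proof (rule sum_mono)
    fix s
    have "0 \<le> b s" unfolding b_def by (rule order_trans[OF abs_ge_zero Max_atMost_ge[of s s]]) simp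
    moreover have "sgn (S s) * D s \<le> \<bar>S s + D s\<bar> - \<bar>S s\<bar>"
      by (cases "S s" "0::real" rule: linorder_cases) (auto simp: sgn_if)
    ultimately show "(b s * sgn (S s)) * D s \<le> b s * (\<bar>S (Suc s)\<bar> - \<bar>S s\<bar>)"
      by (simp add: S_def mult.assoc mult_left_mono)
  qed
  moreover have "0 \<le> (2 * \<bar>S n\<bar> - b n)^2" by simp
  ultimately show ?thesis by (simp add: power2_eq_square algebra_simps)
qed

text \<open>The increments \<open>D i\<close> of a square integrable martingale with respect to a filtration
  \<open>G\<close>, indexed so that \<open>D j\<close> is known at time \<open>i\<close> for \<open>j < i\<close>; the martingale property
  \<open>E(D i | G i) = 0\<close> is only used through orthogonality to \<open>L\<^sup>2(G i)\<close>.\<close>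

locale martingale_differences =
  fixes M :: "'a measure" and G :: "nat \<Rightarrow> 'a measure" and D :: "nat \<Rightarrow> 'a \<Rightarrow> real"
  assumes square_integrable_D: "\<And>i. square_integrable M (D i)"
    and subalgebra_G: "\<And>i. subalgebra M (G i)"
    and D_measurable: "\<And>i j. j < i \<Longrightarrow> D j \<in> borel_measurable (G i)"
    and orthogonal: "\<And>i h. h \<in> borel_measurable (G i) \<Longrightarrow> square_integrable M h \<Longrightarrow>
      integral\<^sup>L M (\<lambda>x. h x * D i x) = 0"
begin

lemma partial_sum_measurable: "j \<le> s \<Longrightarrow> (\<lambda>x. \<Sum>i<j. D i x) \<in> borel_measurable (G s)"
  using D_measurable by (intro borel_measurable_sum) auto

lemma square_integrable_partial_sum: "square_integrable M (\<lambda>x. \<Sum>i<j. D i x)"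
  using square_integrable_D by auto

lemma integral_partial_sum_power2:
  "integral\<^sup>L M (\<lambda>x. (\<Sum>i<n. D i x)^2) = (\<Sum>i<n. integral\<^sup>L M (\<lambda>x. (D i x)^2))"
proof (induction n)
  case (Suc n)
  define S where "S = (\<lambda>x. \<Sum>i<n. D i x)"
  have S: "square_integrable M S" "S \<in> borel_measurable (G n)"
    unfolding S_def by (auto intro: square_integrable_partial_sum partial_sum_measurable)
  have "integral\<^sup>L M (\<lambda>x. (\<Sum>i<Suc n. D i x)^2)
      = integral\<^sup>L M (\<lambda>x. (S x)^2 + 2 * (S x * D n x) + (D n x)^2)"
    by (simp add: S_def power2_sum algebra_simps)
  also have "\<dots> = integral\<^sup>L M (\<lambda>x. (S x)^2) + 2 * integral\<^sup>L M (\<lambda>x. S x * D n x)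
      + integral\<^sup>L M (\<lambda>x. (D n x)^2)"
    using S square_integrable_D[of n] integrable_mult_square_integrable[OF S(1) square_integrable_D]
    by (simp add: square_integrable_def)
  also have "integral\<^sup>L M (\<lambda>x. S x * D n x) = 0" by (rule orthogonal[OF S(2,1)])
  finally show ?case using Suc by (simp add: S_def)
qed simp

definition max_partial_sum :: "nat \<Rightarrow> 'a \<Rightarrow> real" where
  "max_partial_sum n x = Max ((\<lambda>j. \<bar>\<Sum>i<j. D i x\<bar>) ` {..n})"

lemma max_partial_sum_measurable: "max_partial_sum s \<in> borel_measurable (G s)"
  unfolding max_partial_sum_def by (intro borel_measurable_Max borel_measurable_abs partial_sum_measurable) auto

lemma square_integrable_max_partial_sum: "square_integrable M (max_partial_sum n)"
  unfolding max_partial_sum_def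
  by (intro square_integrable_Max_abs square_integrable_partial_sum) auto

lemma Doob_L2_maximal_inequality:
  "integral\<^sup>L M (\<lambda>x. (max_partial_sum n x)^2) \<le> 4 * integral\<^sup>L M (\<lambda>x. (\<Sum>i<n. D i x)^2)"
proof -
  define h where "h = (\<lambda>s x. max_partial_sum s x * sgn (\<Sum>i<s. D i x))"
  have hG: "h s \<in> borel_measurable (G s)" for s
    unfolding h_def using max_partial_sum_measurable partial_sum_measurable[of s s] by measurable
  have h: "square_integrable M (h s)" for s
  proof (rule square_integrable_bound[OF square_integrable_max_partial_sum])
    show "h s \<in> borel_measurable M" by (rule measurable_from_subalg[OF subalgebra_G hG])
    show "AE x in M. \<bar>h s x\<bar> \<le> \<bar>max_partial_sum s x\<bar>"
      by (auto simp: h_def abs_mult sgn_if)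
  qed
  have hD: "integrable M (\<lambda>x. h s x * D s x)" for s
    by (rule integrable_mult_square_integrable[OF h square_integrable_D])
  have "(max_partial_sum n x)^2 \<le> 4 * (\<Sum>i<n. D i x)^2 - 4 * (\<Sum>s<n. h s x * D s x)" for x
    unfolding max_partial_sum_def h_def by (rule running_Max_abs_partial_sums_power2_le)
  then have "integral\<^sup>L M (\<lambda>x. (max_partial_sum n x)^2)
      \<le> integral\<^sup>L M (\<lambda>x. 4 * (\<Sum>i<n. D i x)^2 - 4 * (\<Sum>s<n. h s x * D s x))"
    using square_integrable_max_partial_sum square_integrable_partial_sum hD
    by (intro integral_mono) (auto simp: square_integrable_def)
  also have "\<dots> = 4 * integral\<^sup>L M (\<lambda>x. (\<Sum>i<n. D i x)^2)"
    using square_integrable_partial_sum[of n] hD orthogonal[OF hG h]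
    by (simp add: square_integrable_def)
  finally show ?thesis .
qed

end


section \<open>Maximal partial sums\<close>

definition max_partial_sums :: "(nat \<Rightarrow> real) \<Rightarrow> nat \<Rightarrow> real" where
  "max_partial_sums z n = Max ((\<lambda>j. \<bar>\<Sum>i<j. z i\<bar>) ` {1..n})"

lemma abs_partial_sum_le_max_partial_sums:
  "j \<in> {1..n} \<Longrightarrow> \<bar>\<Sum>i<j. z i\<bar> \<le> max_partial_sums z n"
  unfolding max_partial_sums_def by (intro Max_ge) auto

lemma max_partial_sums_nonneg: "1 \<le> n \<Longrightarrow> 0 \<le> max_partial_sums z n"
  using abs_partial_sum_le_max_partial_sums[of 1 n z] by (meson abs_ge_zero atLeastAtMost_iff order_trans order_refl)

lemma max_partial_sums_mono: "1 \<le> n \<Longrightarrow> n \<le> N \<Longrightarrow> max_partial_sums z n \<le> max_partial_sums z N"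
  unfolding max_partial_sums_def by (intro Max_mono image_mono) auto

lemma borel_measurable_max_partial_sums [measurable]:
  "(\<And>i. f i \<in> borel_measurable M) \<Longrightarrow> (\<lambda>x. max_partial_sums (\<lambda>i. f i x) n) \<in> borel_measurable M"
  unfolding max_partial_sums_def by measurable

lemma square_integrable_max_partial_sums:
  assumes "1 \<le> n" "\<And>i. square_integrable M (f i)"
  shows "square_integrable M (\<lambda>x. max_partial_sums (\<lambda>i. f i x) n)"
  unfolding max_partial_sums_def using assms by (intro square_integrable_Max_abs square_integrable_sum) auto

lemma sum_lessThan_double:
  fixes z :: "nat \<Rightarrow> real"
  shows "(\<Sum>i<2*k. z i) = (\<Sum>i<k. z (2*i) + z (2*i+1))"
  by (induction k) (auto simp: mult_2)

lemma abs_le_sqrt_sum_power2: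
  fixes a :: "'b \<Rightarrow> real"
  shows "finite A \<Longrightarrow> k \<in> A \<Longrightarrow> \<bar>a k\<bar> \<le> sqrt (\<Sum>i\<in>A. (a i)^2)"
  using member_le_sum[of k A "\<lambda>i. (a i)^2"] by (intro real_le_rsqrt) simp

text \<open>Grouping the terms of a sequence in pairs \<open>z\<^sub>2\<^sub>i + z\<^sub>2\<^sub>i\<^sub>+\<^sub>1 = (z\<^sub>2\<^sub>i + z\<^sub>2\<^sub>i\<^sub>+\<^sub>1 - w\<^sub>i) + w\<^sub>i\<close>;
  a partial sum of odd length leaves one unpaired term, which is dominated by the \<open>\<ell>\<^sup>2\<close> norm
  of the even-indexed terms.\<close>

lemma max_partial_sums_double_le:
  fixes z w :: "nat \<Rightarrow> real"
  assumes N: "1 \<le> N"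
  shows "max_partial_sums z (2*N)
     \<le> Max ((\<lambda>k. \<bar>\<Sum>i<k. z (2*i) + z (2*i+1) - w i\<bar>) ` {..N})
       + max_partial_sums w N + sqrt (\<Sum>i<N. (z (2*i))^2)"
    (is "_ \<le> ?A + ?B + ?C")
proof -
  have "\<bar>\<Sum>i<j. z i\<bar> \<le> ?A + ?B + ?C" if j: "1 \<le> j" "j \<le> 2 * N" for j
  proof -
    define k where "k = j div 2"
    have kN: "k \<le> N" using j by (simp add: k_def)
    have split: "(\<Sum>i<j. z i) = (\<Sum>i<k. z (2*i) + z (2*i+1) - w i) + (\<Sum>i<k. w i)
       + (if odd j then z (2*k) else 0)"
    proof (cases "odd j")
      case True
      then have "j = Suc (2*k)" by (simp add: k_def)
      then show ?thesis using True by (simp add: sum_lessThan_double sum_subtractf)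
    next
      case False
      then have "j = 2*k" by (simp add: k_def)
      then show ?thesis using False by (simp add: sum_lessThan_double sum_subtractf)
    qed
    have "\<bar>\<Sum>i<k. z (2*i) + z (2*i+1) - w i\<bar> \<le> ?A"
      using kN by (intro Max_ge) auto
    moreover have "\<bar>\<Sum>i<k. w i\<bar> \<le> ?B"
      using kN max_partial_sums_nonneg[OF N, of w]
      by (cases "k = 0") (auto intro: abs_partial_sum_le_max_partial_sums)
    moreover have "\<bar>if odd j then z (2*k) else 0\<bar> \<le> ?C"
    proof (cases "odd j")
      case True
      then have "k < N" using j by (simp add: k_def) presburger
      then show ?thesis using True abs_le_sqrt_sum_power2[of "{..<N}" k "\<lambda>i. z (2*i)"] by simp
    qed (simp add: sum_nonneg)
    ultimately show ?thesis unfolding split by linarith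
  qed
  then show ?thesis using N unfolding max_partial_sums_def by (intro Max.boundedI) auto
qed


section \<open>Stationary sequences: one dyadic step\<close>

locale stationary_sequence = stationary_filtration +
  fixes Z :: "'a \<Rightarrow> real"
  assumes Z_measurable_F0: "Z \<in> borel_measurable F0"
    and square_integrable_Z: "square_integrable M Z"
begin

lemma Z_measurable_Fk0: "Z \<in> borel_measurable (Fk 0)"
  using Z_measurable_F0 measurable_Fk0_iff by simp

lemma Z_measurable [measurable]: "Z \<in> borel_measurable M"
  using square_integrable_Z by (rule square_integrable_measurable)

lemma integrable_Z: "integrable M Z"
  using square_integrable_Z by (rule square_integrable_integrable)

text \<open>\<open>innov i\<close> is what remains of the block starting at time \<open>2 i\<close> after removing its
  predictable part; it is \<open>Fk (2 * i + 1)\<close>-measurable and orthogonal to \<open>L\<^sup>2(Fk (2 * i))\<close>.\<close>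

definition Zpair :: "'a \<Rightarrow> real" where "Zpair x = Z x + Z (T x)"
definition Zpred :: "'a \<Rightarrow> real" where "Zpred = E 0 Zpair"
definition Zinnov :: "'a \<Rightarrow> real" where "Zinnov x = Zpair x - Zpred x"
definition innov :: "nat \<Rightarrow> 'a \<Rightarrow> real" where "innov i x = Zinnov ((T ^^ (2*i)) x)"

lemma Zpair_measurable: "Zpair \<in> borel_measurable (Fk 1)"
  unfolding Zpair_def
  using measurable_Fk_mono[OF _ Z_measurable_Fk0, of 1] measurable_Fk_funpow[OF Z_measurable_Fk0, of 1]
  by (intro borel_measurable_add) auto

lemma square_integrable_Zpair: "square_integrable M Zpair"
  unfolding Zpair_def using square_integrable_Z square_integrable_funpow[OF square_integrable_Z, of 1]
  by (intro square_integrable_add) auto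

lemma L2norm_Zpair_le: "L2norm M Zpair \<le> 2 * L2norm M Z"
  using L2norm_add_le[OF square_integrable_Z square_integrable_funpow[OF square_integrable_Z, of 1]]
    L2norm_funpow[OF Z_measurable, of 1]
  by (simp add: Zpair_def[abs_def])

lemma Zpred_measurable_Fk0: "Zpred \<in> borel_measurable (Fk 0)"
  by (simp add: Zpred_def)

lemma Zpred_measurable_F0: "Zpred \<in> borel_measurable F0"
  using Zpred_measurable_Fk0 measurable_Fk0_iff by simp

lemma square_integrable_Zpred: "square_integrable M Zpred"
  unfolding Zpred_def by (rule square_integrable_E[OF square_integrable_Zpair])

lemma square_integrable_Zinnov: "square_integrable M Zinnov"
  unfolding Zinnov_def[abs_def] by (rule square_integrable_diff[OF square_integrable_Zpair square_integrable_Zpred])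

lemma L2norm_Zinnov_le: "L2norm M Zinnov \<le> 4 * L2norm M Z"
  using L2norm_diff_le[OF square_integrable_Zpair square_integrable_Zpred] L2norm_Zpair_le
    L2norm_E_le[OF square_integrable_Zpair, of 0]
  by (simp add: Zinnov_def[abs_def] Zpred_def)

lemma E0_Zinnov: "AE x in M. E 0 Zinnov x = 0"
proof -
  have i: "integrable M Zpair" "integrable M Zpred"
    using square_integrable_Zpair square_integrable_Zpred by (auto intro: square_integrable_integrable)
  have "AE x in M. E 0 Zinnov x = E 0 Zpair x - E 0 Zpred x"
    unfolding Zinnov_def by (rule E_diff[OF i])
  moreover have "AE x in M. E 0 Zpred x = Zpred x" by (rule E_self[OF i(2) Zpred_measurable_Fk0])
  ultimately show ?thesis by eventually_elim (simp add: Zpred_def)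
qed

lemma innov_measurable: "innov i \<in> borel_measurable (Fk (Suc (2*i)))"
proof -
  have "Zinnov \<in> borel_measurable (Fk 1)"
    unfolding Zinnov_def using Zpair_measurable measurable_Fk_mono[OF _ Zpred_measurable_Fk0, of 1]
    by (intro borel_measurable_diff) auto
  then show ?thesis
    unfolding innov_def using measurable_Fk_funpow[of Zinnov 1 "2*i"] by simp
qed

lemma square_integrable_innov: "square_integrable M (innov i)"
  unfolding innov_def by (rule square_integrable_funpow[OF square_integrable_Zinnov])

lemma E_innov: "AE x in M. E (2*i) (innov i) x = 0"
proof -
  have "AE x in M. E (2*i) (innov i) x = E 0 Zinnov ((T ^^ (2*i)) x)"
    unfolding innov_def by (rule E_funpow[OF square_integrable_integrable[OF square_integrable_Zinnov]])
  moreover have "AE x in M. E 0 Zinnov ((T ^^ (2*i)) x) = 0" by (rule AE_funpow[OF E0_Zinnov])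
  ultimately show ?thesis by eventually_elim simp
qed

lemma martingale_differences_innov: "martingale_differences M (\<lambda>i. Fk (2*i)) innov"
proof
  fix i h
  assume h: "h \<in> borel_measurable (Fk (2*i))" "square_integrable M h"
  then have "integral\<^sup>L M (\<lambda>x. h x * innov i x) = integral\<^sup>L M (\<lambda>x. h x * E (2*i) (innov i) x)"
    using integrable_mult_square_integrable[OF h(2) square_integrable_innov] square_integrable_innov
    by (intro integral_mult_E[symmetric]) auto
  also have "\<dots> = 0"
    using E_innov[of i] h by (subst integral_cong_AE[where g = "\<lambda>x. 0"]) (auto elim!: eventually_mono)
  finally show "integral\<^sup>L M (\<lambda>x. h x * innov i x) = 0" .
qed (auto intro: square_integrable_innov subalgebra_Fk measurable_Fk_mono[OF _ innov_measurable])

lemma E0_innov: "AE x in M. E 0 (innov i) x = 0"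
proof -
  have "integrable M (innov i)" by (rule square_integrable_integrable[OF square_integrable_innov])
  then have "AE x in M. E 0 (E (2*i) (innov i)) x = E 0 (innov i) x" by (rule E_tower[rotated]) simp
  moreover have "AE x in M. E 0 (E (2*i) (innov i)) x = E 0 (\<lambda>x. 0) x"
    by (rule E_cong[OF E_innov]) auto
  moreover have "AE x in M. E 0 (\<lambda>x. 0) x = 0"
    using E_self[of "\<lambda>x. 0" 0] by simp
  ultimately show ?thesis by eventually_elim simp
qed

lemma sum_double_eq:
  "(\<Sum>i<2*k. Z ((T ^^ i) x)) = (\<Sum>i<k. innov i x) + (\<Sum>i<k. Zpred ((T ^^ (2*i)) x))"
  by (simp add: sum_lessThan_double innov_def Zinnov_def Zpair_def sum.distrib[symmetric])

text \<open>The martingale parts vanish under \<open>E 0\<close>.\<close>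

lemma E0_sum_double:
  "AE x in M. E 0 (\<lambda>x. \<Sum>i<2*k. Z ((T ^^ i) x)) x = E 0 (\<lambda>x. \<Sum>i<k. Zpred ((T ^^ (2*i)) x)) x"
proof -
  have i: "integrable M (\<lambda>x. \<Sum>i<k. innov i x)" "integrable M (\<lambda>x. \<Sum>i<k. Zpred ((T ^^ (2*i)) x))"
    using square_integrable_innov square_integrable_Zpred
    by (auto intro!: square_integrable_integrable square_integrable_sum square_integrable_funpow)
  have "AE x in M. E 0 (\<lambda>x. (\<Sum>i<k. innov i x) + (\<Sum>i<k. Zpred ((T ^^ (2*i)) x))) x
      = E 0 (\<lambda>x. \<Sum>i<k. innov i x) x + E 0 (\<lambda>x. \<Sum>i<k. Zpred ((T ^^ (2*i)) x)) x"
    by (rule E_add[OF i])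
  moreover have "AE x in M. E 0 (\<lambda>x. \<Sum>i<k. innov i x) x = (\<Sum>i<k. E 0 (innov i) x)"
    using square_integrable_innov by (intro E_sum square_integrable_integrable)
  moreover have "AE x in M. \<forall>i\<in>{..<k}. E 0 (innov i) x = 0"
    using E0_innov by (subst AE_finite_all) auto
  ultimately show ?thesis unfolding sum_double_eq by eventually_elim simp
qed

lemma L2norm_max_innov_le:
  "L2norm M (martingale_differences.max_partial_sum innov N) \<le> 2 * sqrt (real N) * L2norm M Zinnov"
proof -
  interpret martingale_differences M "\<lambda>i. Fk (2*i)" innov by (rule martingale_differences_innov)
  have "integral\<^sup>L M (\<lambda>x. (max_partial_sum N x)^2) \<le> 4 * (\<Sum>i<N. integral\<^sup>L M (\<lambda>x. (innov i x)^2))"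
    using Doob_L2_maximal_inequality[of N] by (simp add: integral_partial_sum_power2)
  also have "\<dots> = 4 * (real N * (L2norm M Zinnov)^2)"
    using L2norm_funpow[OF square_integrable_measurable[OF square_integrable_Zinnov]]
    by (simp add: innov_def L2norm_power2[symmetric])
  finally have "L2norm M (max_partial_sum N) \<le> sqrt (4 * (real N * (L2norm M Zinnov)^2))"
    unfolding L2norm_def by (rule real_sqrt_le_mono)
  then show ?thesis by (simp add: real_sqrt_mult)
qed

lemma L2norm_sqrt_sum_power2_Z:
  "L2norm M (\<lambda>x. sqrt (\<Sum>i<N. (Z ((T ^^ (2*i)) x))^2)) = sqrt (real N) * L2norm M Z"
  using square_integrable_funpow[OF square_integrable_Z]
  by (simp add: L2norm_sqrt_sum_power2 L2norm_funpow real_sqrt_mult)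

lemma square_integrable_sqrt_sum_power2_Z:
  "square_integrable M (\<lambda>x. sqrt (\<Sum>i<N. (Z ((T ^^ (2*i)) x))^2))"
proof (rule square_integrable_bound[of _ "\<lambda>x. \<Sum>i<N. \<bar>Z ((T ^^ (2*i)) x)\<bar>"])
  show "square_integrable M (\<lambda>x. \<Sum>i<N. \<bar>Z ((T ^^ (2 * i)) x)\<bar>)"
    by (intro square_integrable_sum square_integrable_abs square_integrable_funpow[OF square_integrable_Z])
  show "(\<lambda>x. sqrt (\<Sum>i<N. (Z ((T ^^ (2 * i)) x))\<^sup>2)) \<in> borel_measurable M"
    using measurable_compose[OF funpow_measurable Z_measurable] by measurable
  show "AE x in M. \<bar>sqrt (\<Sum>i<N. (Z ((T ^^ (2 * i)) x))\<^sup>2)\<bar> \<le> \<bar>\<Sum>i<N. \<bar>Z ((T ^^ (2 * i)) x)\<bar>\<bar>"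
    by (intro AE_I2) (simp add: sum_nonneg L2_set_le_sum_abs[unfolded L2_set_def])
qed

text \<open>The error \<open>9 \<surd>N \<parallel>Z\<parallel>\<close> consists of \<open>8 \<surd>N \<parallel>Z\<parallel>\<close> from Doob's inequality for the martingale
  part and \<open>\<surd>N \<parallel>Z\<parallel>\<close> from the unpaired terms.\<close>

lemma L2norm_max_partial_sums_double_le:
  assumes N: "1 \<le> N"
  shows "L2norm M (\<lambda>x. max_partial_sums (\<lambda>i. Z ((T ^^ i) x)) (2*N))
     \<le> L2norm M (\<lambda>x. max_partial_sums (\<lambda>i. Zpred ((T ^^ (2*i)) x)) N) + 9 * sqrt (real N) * L2norm M Z"
proof -
  interpret martingale_differences M "\<lambda>i. Fk (2*i)" innov by (rule martingale_differences_innov)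
  define B where "B = (\<lambda>x. max_partial_sums (\<lambda>i. Zpred ((T ^^ (2*i)) x)) N)"
  define C where "C = (\<lambda>x. sqrt (\<Sum>i<N. (Z ((T ^^ (2*i)) x))^2))"
  have A: "square_integrable M (max_partial_sum N)" by (rule square_integrable_max_partial_sum)
  have B: "square_integrable M B" unfolding B_def using N
    by (intro square_integrable_max_partial_sums square_integrable_funpow[OF square_integrable_Zpred])
  have C: "square_integrable M C" unfolding C_def by (rule square_integrable_sqrt_sum_power2_Z)
  have "max_partial_sums (\<lambda>i. Z ((T ^^ i) x)) (2*N) \<le> max_partial_sum N x + B x + C x" for x
    using max_partial_sums_double_le[OF N, of "\<lambda>i. Z ((T ^^ i) x)" "\<lambda>i. Zpred ((T ^^ (2*i)) x)"]
    by (simp add: max_partial_sum_def B_def C_def innov_def Zinnov_def Zpair_def)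
  moreover have "0 \<le> max_partial_sums (\<lambda>i. Z ((T ^^ i) x)) (2*N)" for x
    using N by (intro max_partial_sums_nonneg) simp
  ultimately have "\<bar>max_partial_sums (\<lambda>i. Z ((T ^^ i) x)) (2*N)\<bar> \<le> \<bar>max_partial_sum N x + B x + C x\<bar>" for x
    by (metis abs_ge_self abs_of_nonneg order_trans)
  then have "L2norm M (\<lambda>x. max_partial_sums (\<lambda>i. Z ((T ^^ i) x)) (2*N))
      \<le> L2norm M (\<lambda>x. max_partial_sum N x + B x + C x)"
    using A B C measurable_compose[OF funpow_measurable Z_measurable]
    by (intro L2norm_mono AE_I2) auto
  also have "\<dots> \<le> L2norm M (max_partial_sum N) + L2norm M B + L2norm M C"
    using A B C L2norm_add_le[OF A B] L2norm_add_le[OF square_integrable_add[OF A B] C] by simp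
  also have "L2norm M (max_partial_sum N) \<le> 2 * sqrt (real N) * L2norm M Zinnov"
    by (rule L2norm_max_innov_le)
  also have "\<dots> \<le> 2 * sqrt (real N) * (4 * L2norm M Z)"
    by (intro mult_left_mono L2norm_Zinnov_le) simp
  finally show ?thesis
    unfolding B_def C_def L2norm_sqrt_sum_power2_Z by (simp add: algebra_simps)
qed

end


section \<open>The dyadic maximal inequality\<close>

definition cond_sum_norm :: "'a measure \<Rightarrow> ('a \<Rightarrow> 'a) \<Rightarrow> 'a measure \<Rightarrow> ('a \<Rightarrow> real) \<Rightarrow> nat \<Rightarrow> real" where
  "cond_sum_norm M T F0 Z k = L2norm M (condE M T F0 0 (Ssum M T Z k))"

definition max_sum_norm :: "'a measure \<Rightarrow> ('a \<Rightarrow> 'a) \<Rightarrow> ('a \<Rightarrow> real) \<Rightarrow> nat \<Rightarrow> real" where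
  "max_sum_norm M T Z n = L2norm M (\<lambda>x. max_partial_sums (\<lambda>i. Z ((T ^^ i) x)) n)"

lemma Ssum_eq: "Ssum M T Z k = (\<lambda>x. \<Sum>i<k. Z ((T ^^ i) x))"
  by (simp add: Ssum_def Xs_def Tpow_def)

lemma condE_zero: "condE M T F0 0 f = real_cond_exp M (vimage_algebra (space M) id F0) f"
  by (simp add: condE_def filt_def Tpow_def)

context stationary_filtration
begin

lemma condE_eq_E: "condE M T F0 (int k) f = E k f"
  by (simp add: condE_def filt_def Tpow_def E_def Fk_def)

lemma cond_sum_norm_eq: "cond_sum_norm M T F0 Z k = L2norm M (E 0 (\<lambda>x. \<Sum>i<k. Z ((T ^^ i) x)))"
  using condE_eq_E[of 0] by (simp add: cond_sum_norm_def Ssum_eq)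

lemma stationary_filtration_funpow2: "stationary_filtration M (T ^^ 2) F0"
proof
  have "sets F0 = sets (Fk 0)" using sets_Fk0 by simp
  also have "\<dots> \<subseteq> sets (Fk 2)" by (rule sets_Fk_mono) simp
  finally show "sets F0 \<subseteq> sets (vimage_algebra (space M) (T ^^ 2) F0)" by (simp add: Fk_def)
qed (auto simp: prob_space_M funpow_measurable distr_funpow subalgebra_F0)

end

context stationary_sequence
begin

lemma stationary_sequence_Zpred: "stationary_sequence M (T ^^ 2) F0 Zpred"
  using stationary_filtration_funpow2 Zpred_measurable_F0 square_integrable_Zpred
  by (simp add: stationary_sequence_def stationary_sequence_axioms_def)

lemma cond_sum_norm_Zpred: "cond_sum_norm M (T ^^ 2) F0 Zpred k = cond_sum_norm M T F0 Z (2 * k)"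
proof -
  have "cond_sum_norm M (T ^^ 2) F0 Zpred k = L2norm M (E 0 (\<lambda>x. \<Sum>i<k. Zpred ((T ^^ (2*i)) x)))"
    by (simp add: cond_sum_norm_def condE_zero Ssum_eq E_def Fk_def funpow_mult)
  also have "\<dots> = L2norm M (E 0 (\<lambda>x. \<Sum>i<2*k. Z ((T ^^ i) x)))"
    by (rule L2norm_cong_AE[OF AE_symmetric[OF E0_sum_double]]) auto
  finally show ?thesis by (simp add: cond_sum_norm_eq)
qed

lemma cond_sum_norm_one: "cond_sum_norm M T F0 Z 1 = L2norm M Z"
  using E_self[OF integrable_Z Z_measurable_Fk0] by (simp add: cond_sum_norm_eq L2norm_cong_AE)

lemma max_sum_norm_one: "max_sum_norm M T Z 1 = L2norm M Z"
  by (simp add: max_sum_norm_def max_partial_sums_def L2norm_def)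

end

text \<open>Iterating the dyadic step along \<open>T, T\<^sup>2, T\<^sup>4, \<dots>\<close>; the norms \<open>\<parallel>Z\<parallel>\<close> produced at each
  step are the norms \<open>\<parallel>E\<^sub>0 S\<^sub>2\<^sub>^\<^sub>l\<parallel>\<close> of the original sequence, by \<open>cond_sum_norm_Zpred\<close>.\<close>

lemma max_sum_norm_pow2_le:
  assumes "stationary_sequence M T F0 Z"
  shows "max_sum_norm M T Z (2^r)
    \<le> cond_sum_norm M T F0 Z (2^r) + 9 * (\<Sum>l<r. sqrt (2^(r-l-1)) * cond_sum_norm M T F0 Z (2^l))"
  using assms
proof (induction r arbitrary: T Z)
  case 0
  then interpret stationary_sequence M T F0 Z .
  show ?case using cond_sum_norm_one max_sum_norm_one by simp
next
  case (Suc r)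
  then interpret stationary_sequence M T F0 Z by simp
  let ?Q = "cond_sum_norm M T F0 Z"
  have "max_sum_norm M T Z (2^Suc r) \<le> max_sum_norm M (T ^^ 2) Zpred (2^r) + 9 * sqrt (2^r) * L2norm M Z"
    using L2norm_max_partial_sums_double_le[of "2^r"] by (simp add: max_sum_norm_def funpow_mult)
  also have "max_sum_norm M (T ^^ 2) Zpred (2^r)
      \<le> ?Q (2^Suc r) + 9 * (\<Sum>l<r. sqrt (2^(r-l-1)) * ?Q (2^Suc l))"
    using Suc.IH[OF stationary_sequence_Zpred] by (simp add: cond_sum_norm_Zpred)
  also have "L2norm M Z = ?Q (2^0)" using cond_sum_norm_one by simp
  finally show ?case
    by (simp add: sum.lessThan_Suc_shift algebra_simps del: sum.lessThan_Suc)
qed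


section \<open>Subadditive sequences with summable weights \<open>a\<^sub>k / k\<^sup>3\<^sup>/\<^sup>2\<close>\<close>

lemma powr_three_halves: "real k powr (3/2) = real k * sqrt (real k)"
proof (cases "k = 0")
  case False
  have "real k powr (3/2) = real k powr (1 + 1/2)" by simp
  also have "\<dots> = real k * sqrt (real k)" using False by (simp only: powr_add powr_half_sqrt) simp
  finally show ?thesis .
qed simp

lemma sqrt2_bounds: "sqrt 2 \<le> (1.5::real)" "(1.4::real) \<le> sqrt 2"
  by (rule real_le_lsqrt real_le_rsqrt; simp add: power2_eq_square)+

lemma sqrt3_le_2: "sqrt 3 \<le> (2::real)"
  by (rule real_le_lsqrt) auto

lemma sum_Ioc_split:
  fixes f :: "nat \<Rightarrow> real"
  assumes "a \<le> b" "b \<le> c"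
  shows "(\<Sum>k\<in>{a<..c}. f k) = (\<Sum>k\<in>{a<..b}. f k) + (\<Sum>k\<in>{b<..c}. f k)"
proof -
  have "{a<..c} = {a<..b} \<union> {b<..c}" using assms by auto
  then show ?thesis by (simp add: sum.union_disjoint ivl_disj_int)
qed

locale subadditive_norms =
  fixes a :: "nat \<Rightarrow> real"
  assumes nonneg: "\<And>k. 0 \<le> a k"
    and subadditive: "\<And>j k. 0 < j \<Longrightarrow> j < k \<Longrightarrow> a j \<le> a k + a (k - j)"
    and summable_weighted: "summable (\<lambda>k. a (Suc k) / real (Suc k) powr (3/2))"
begin

definition b :: "nat \<Rightarrow> real" where "b k = a k / real k powr (3/2)"

definition tail :: "nat \<Rightarrow> real" where "tail m = (\<Sum>i. b (i + m + 1))"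

lemma b_nonneg: "0 \<le> b k"
  by (simp add: b_def nonneg)

lemma a_eq_b: "1 \<le> k \<Longrightarrow> a k = b k * (real k * sqrt (real k))"
  by (simp add: b_def powr_three_halves)

lemma summable_tail: "summable (\<lambda>i. b (i + m + 1))"
  using summable_weighted summable_iff_shift[of "\<lambda>i. b (Suc i)" m] by (simp add: b_def)

lemma tail_nonneg: "0 \<le> tail m"
  unfolding tail_def by (rule suminf_nonneg[OF summable_tail b_nonneg])

lemma sum_le_tail:
  assumes "finite A" "\<And>k. k \<in> A \<Longrightarrow> m < k"
  shows "(\<Sum>k\<in>A. b k) \<le> tail m"
proof -
  have inj: "inj_on (\<lambda>k. k - (m + 1)) A"
    using assms(2) by (intro inj_onI) (metis Suc_eq_plus1 Suc_le_eq diff_add_inverse2 le_add_diff_inverse2)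
  have "(\<Sum>k\<in>A. b k) = (\<Sum>i\<in>(\<lambda>k. k - (m + 1)) ` A. b (i + m + 1))"
  proof (subst sum.reindex[OF inj], intro sum.cong refl)
    fix k assume "k \<in> A"
    then have "k - (m + 1) + m + 1 = k" using assms(2) by fastforce
    then show "b k = ((\<lambda>i. b (i + m + 1)) \<circ> (\<lambda>k. k - (m + 1))) k" by simp
  qed
  also have "\<dots> \<le> tail m" unfolding tail_def
    by (rule sum_le_suminf[OF summable_tail]) (use assms(1) b_nonneg in auto)
  finally show ?thesis .
qed

lemma sum_le_sum_b:
  assumes "finite A" "\<And>k. k \<in> A \<Longrightarrow> 1 \<le> k \<and> k \<le> K"
  shows "(\<Sum>k\<in>A. a k) \<le> (real K * sqrt (real K)) * (\<Sum>k\<in>A. b k)"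
proof -
  have "(\<Sum>k\<in>A. a k) = (\<Sum>k\<in>A. b k * (real k * sqrt (real k)))"
    using assms by (intro sum.cong) (auto simp: a_eq_b)
  also have "\<dots> \<le> (\<Sum>k\<in>A. b k * (real K * sqrt (real K)))"
    using assms b_nonneg by (intro sum_mono mult_left_mono mult_mono) auto
  finally show ?thesis by (simp add: sum_distrib_right mult.commute)
qed

lemma averaged_subadditivity:
  assumes "1 \<le> j"
  shows "real N * a j \<le> (\<Sum>k\<in>{N+j+1..2*N+j}. a k) + (\<Sum>k\<in>{N+1..2*N}. a k)"
proof -
  have "real N * a j = (\<Sum>k\<in>{N+j+1..2*N+j}. a j)" by simp
  also have "\<dots> \<le> (\<Sum>k\<in>{N+j+1..2*N+j}. a k + a (k - j))"
    using assms by (intro sum_mono subadditive) auto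
  also have "\<dots> = (\<Sum>k\<in>{N+j+1..2*N+j}. a k) + (\<Sum>k\<in>{(N+1)+j..(2*N)+j}. a (k - j))"
    by (simp add: sum.distrib)
  also have "(\<Sum>k\<in>{(N+1)+j..(2*N)+j}. a (k - j)) = (\<Sum>k\<in>{N+1..2*N}. a k)"
    by (simp only: sum.shift_bounds_cl_nat_ivl) simp
  finally show ?thesis .
qed

lemma le_sum_b_block:
  assumes j: "1 \<le> j"
  shows "a j \<le> 6 * sqrt (real j) * (\<Sum>k\<in>{j+1..3*j}. b k)"
proof -
  have "{j+j+1..2*j+j} = {2*j+1..3*j}" by (intro arg_cong2[where f = atLeastAtMost]) auto
  then have "real j * a j \<le> (\<Sum>k\<in>{2*j+1..3*j}. a k) + (\<Sum>k\<in>{j+1..2*j}. a k)"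
    using averaged_subadditivity[OF j, of j] by (simp only:)
  also have "\<dots> = (\<Sum>k\<in>{j+1..3*j}. a k)"
  proof -
    have "{j+1..3*j} = {j+1..2*j} \<union> {2*j+1..3*j}" "{j+1..2*j} \<inter> {2*j+1..3*j} = {}" by auto
    then show ?thesis by (simp add: sum.union_disjoint add.commute)
  qed
  also have "\<dots> \<le> (real (3*j) * sqrt (real (3*j))) * (\<Sum>k\<in>{j+1..3*j}. b k)"
    by (rule sum_le_sum_b) auto
  also have "\<dots> = real j * (3 * sqrt 3 * sqrt (real j) * (\<Sum>k\<in>{j+1..3*j}. b k))"
    by (simp add: real_sqrt_mult)
  finally have "a j \<le> 3 * sqrt 3 * sqrt (real j) * (\<Sum>k\<in>{j+1..3*j}. b k)"
    using j by simp
  also have "\<dots> \<le> 6 * sqrt (real j) * (\<Sum>k\<in>{j+1..3*j}. b k)"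
    using b_nonneg sqrt3_le_2
    by (intro mult_right_mono sum_nonneg) auto
  finally show ?thesis .
qed

lemma le_tail:
  assumes j: "1 \<le> j" and N: "j \<le> N" "m \<le> N"
  shows "a j \<le> 12 * sqrt (real N) * tail m"
proof -
  have N1: "1 \<le> N" using j N by simp
  have A: "(\<Sum>k\<in>A. a k) \<le> (real (3*N) * sqrt (real (3*N))) * tail m" if "A \<subseteq> {m+1..3*N}" for A
  proof -
    have "finite A" using that finite_subset by blast
    then have "(\<Sum>k\<in>A. a k) \<le> (real (3*N) * sqrt (real (3*N))) * (\<Sum>k\<in>A. b k)"
      using that by (intro sum_le_sum_b) auto
    also have "\<dots> \<le> (real (3*N) * sqrt (real (3*N))) * tail m"
      using that \<open>finite A\<close> by (intro mult_left_mono sum_le_tail) auto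
    finally show ?thesis .
  qed
  have "real N * a j \<le> 2 * ((real (3*N) * sqrt (real (3*N))) * tail m)"
    using averaged_subadditivity[OF j, of N] A[of "{N+j+1..2*N+j}"] A[of "{N+1..2*N}"] N by force
  also have "\<dots> = real N * (6 * sqrt 3 * sqrt (real N) * tail m)"
    by (simp add: real_sqrt_mult)
  finally have "a j \<le> 6 * sqrt 3 * sqrt (real N) * tail m"
    using N1 by simp
  also have "\<dots> \<le> 12 * sqrt (real N) * tail m"
    using tail_nonneg sqrt3_le_2 by (intro mult_right_mono) auto
  finally show ?thesis .
qed

end


section \<open>Dyadic summation of the weights\<close>

lemma sum_sqrt_pow2_le:
  fixes m :: nat
  shows "(\<Sum>l<n. if 2^l \<le> m then sqrt (2^l) else 0) \<le> 4 * sqrt (real m)"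
proof -
  define c :: real where "c = sqrt 2 + 1"
  have inv: "(\<Sum>l<n. if 2^l \<le> m then sqrt (2^l) else 0) \<le> c * (sqrt (2^n) - 1)
     \<and> (\<Sum>l<n. if 2^l \<le> m then sqrt (2^l) else 0) \<le> c * sqrt (2 * real m)" for n
  proof (induction n)
    case 0 then show ?case by (simp add: c_def)
  next
    case (Suc n)
    let ?S = "\<Sum>l<n. if 2^l \<le> m then sqrt ((2::real)^l) else 0"
    have sq: "sqrt ((2::real)^Suc n) = sqrt 2 * sqrt (2^n)" by (simp add: real_sqrt_mult)
    have p: "sqrt ((2::real)^n) \<ge> 1" by simp
    show ?case
    proof (cases "2^n \<le> m")
      case True
      have "?S + sqrt (2^n) \<le> c * (sqrt (2^n) - 1) + sqrt (2^n)" using Suc by simp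
      also have "\<dots> = c * (sqrt (2^Suc n) - 1)" unfolding sq c_def by (simp add: algebra_simps)
      finally have A: "?S + sqrt (2^n) \<le> c * (sqrt (2^Suc n) - 1)" .
      have "real (2^Suc n) \<le> 2 * real m" using True by simp
      then have "sqrt (2^Suc n) \<le> sqrt (2 * real m)" by (simp del: of_nat_power add: of_nat_power[symmetric])
      then have "sqrt (2^Suc n) - 1 \<le> sqrt (2 * real m)" by linarith
      then have B: "c * (sqrt (2^Suc n) - 1) \<le> c * sqrt (2 * real m)"
        unfolding c_def by (intro mult_left_mono) auto
      show ?thesis using True A B by simp
    next
      case False
      have "c * (sqrt (2^n) - 1) \<le> c * (sqrt (2^Suc n) - 1)" unfolding c_def
        by (intro mult_left_mono) auto
      then show ?thesis using False Suc by simp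
    qed
  qed
  have "c * sqrt (2 * real m) = (2 + sqrt 2) * sqrt (real m)"
    by (simp add: c_def real_sqrt_mult algebra_simps)
  also have "\<dots> \<le> 4 * sqrt (real m)" using sqrt2_bounds by (intro mult_right_mono) auto
  finally show ?thesis using inv[of n] by linarith
qed

lemma sum_inverse_sqrt_pow2_le:
  fixes m :: nat
  assumes "m \<ge> 1"
  shows "(\<Sum>l<n. if 2^l > m then 1 / sqrt (2^l) else 0) \<le> 4 / sqrt (real m)"
proof -
  define c :: real where "c = 2 + sqrt 2"
  have c1: "c * (1 - 1 / sqrt 2) = 1"
    by (simp add: c_def field_simps)
  have inv: "(\<Sum>l<n. if 2^l > m then 1 / sqrt (2^l) else 0) \<le> c * max 0 (1 / sqrt m - 1 / sqrt (2^n))" for n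
  proof (induction n)
    case 0 then show ?case by (simp add: c_def)
  next
    case (Suc n)
    let ?S = "\<Sum>l<n. if 2^l > m then 1 / sqrt ((2::real)^l) else 0"
    have sq: "sqrt ((2::real)^Suc n) = sqrt 2 * sqrt (2^n)" by (simp add: real_sqrt_mult)
    have mono: "1 / sqrt ((2::real)^Suc n) \<le> 1 / sqrt (2^n)" by (simp add: sq field_simps)
    show ?case
    proof (cases "2^n > m")
      case True
      have lt: "1 / sqrt (2^n) < 1 / sqrt (real m)"
        using True assms by (simp add: field_simps del: of_nat_power add: of_nat_power[symmetric])
      have "?S + 1 / sqrt (2^n) \<le> c * (1 / sqrt m - 1 / sqrt (2^n)) + 1 / sqrt (2^n)"
        using Suc lt by simp
      also have "\<dots> = c * (1 / sqrt m - 1 / sqrt (2^Suc n)) + (1 - c * (1 - 1 / sqrt 2)) / sqrt (2^n)"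
        unfolding sq by (simp add: field_simps)
      also have "\<dots> = c * (1 / sqrt m - 1 / sqrt (2^Suc n))" using c1 by simp
      also have "\<dots> \<le> c * max 0 (1 / sqrt m - 1 / sqrt (2^Suc n))"
        unfolding c_def by (intro mult_left_mono) auto
      finally show ?thesis using True by simp
    next
      case False
      have "c * max 0 (1 / sqrt m - 1 / sqrt (2^n)) \<le> c * max 0 (1 / sqrt m - 1 / sqrt (2^Suc n))"
        unfolding c_def using mono by (intro mult_left_mono) auto
      then show ?thesis using False Suc by simp
    qed
  qed
  have "c * max 0 (1 / sqrt m - 1 / sqrt (2^n)) \<le> c * (1 / sqrt m)"
    unfolding c_def by (intro mult_left_mono) auto
  also have "\<dots> \<le> 4 / sqrt m" using sqrt2_bounds by (simp add: c_def divide_right_mono)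
  finally show ?thesis using inv[of n] by linarith
qed

context subadditive_norms
begin

definition dyadic_block :: "nat \<Rightarrow> real" where "dyadic_block l = (\<Sum>k\<in>{2^l<..2^Suc l}. b k)"
definition block :: "nat \<Rightarrow> real" where "block L = (\<Sum>k\<in>{L<..6*L}. b k)"

lemma dyadic_block_nonneg: "dyadic_block l \<ge> 0" unfolding dyadic_block_def by (intro sum_nonneg b_nonneg)

lemma block_pow2_le: "block (2^l) \<le> dyadic_block l + dyadic_block (Suc l) + dyadic_block (Suc (Suc l))"
proof -
  have p3: "(2::nat)^Suc (Suc (Suc l)) = 8 * 2^l" by simp
  have sub: "{2^l<..6*2^l} \<subseteq> {(2::nat)^l<..2^Suc (Suc (Suc l))}" unfolding p3 by auto
  have "block (2^l) \<le> (\<Sum>k\<in>{2^l<..2^(Suc (Suc (Suc l)))}. b k)"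
    unfolding block_def by (rule sum_mono2[OF _ sub]) (auto intro: b_nonneg)
  also have "\<dots> = (\<Sum>k\<in>{2^l<..2^Suc l}. b k) + (\<Sum>k\<in>{2^Suc l<..2^Suc (Suc (Suc l))}. b k)"
    by (rule sum_Ioc_split) (simp_all add: power_increasing)
  also have "(\<Sum>k\<in>{2^Suc l<..2^Suc (Suc (Suc l))}. b k)
      = (\<Sum>k\<in>{2^Suc l<..2^Suc (Suc l)}. b k) + (\<Sum>k\<in>{2^Suc (Suc l)<..2^Suc (Suc (Suc l))}. b k)"
    by (rule sum_Ioc_split) (simp_all add: power_increasing)
  finally show ?thesis by (simp add: dyadic_block_def)
qed

lemma sum_dyadic_block_le: "(\<Sum>l<n. if 2^l > m then dyadic_block l else 0) \<le> (\<Sum>k\<in>{m<..2^n}. b k)"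
proof (induction n)
  case (Suc n)
  show ?case
  proof (cases "2^n > m")
    case True
    have "(\<Sum>k\<in>{m<..2^Suc n}. b k) = (\<Sum>k\<in>{m<..2^n}. b k) + dyadic_block n"
      unfolding dyadic_block_def using True by (intro sum_Ioc_split) auto
    then show ?thesis using Suc True by simp
  next
    case False
    have "(\<Sum>k\<in>{m<..2^n}. b k) \<le> (\<Sum>k\<in>{m<..2^Suc n}. b k)"
      by (rule sum_mono2) (auto intro: b_nonneg)
    then show ?thesis using Suc False by simp
  qed
qed (simp add: sum_nonneg b_nonneg)

lemma sum_dyadic_block_le_tail: "(\<Sum>l<n. if 2^l > m then dyadic_block l else 0) \<le> tail m"
  using sum_dyadic_block_le[of m n] sum_le_tail[of "{m<..2^n}" m] by simp

lemma sum_dyadic_block_shift_le_tail: "(\<Sum>l<n. if 2^l > m then dyadic_block (l + t) else 0) \<le> tail m"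
proof -
  have "(\<Sum>l<n. if 2^l > m then dyadic_block (l + t) else 0) \<le> (\<Sum>l<n. if 2^(l+t) > m then dyadic_block (l + t) else 0)"
  proof (rule sum_mono)
    fix l
    have "(2::nat)^l \<le> 2^(l+t)" by (simp add: power_increasing)
    then have "m < 2^l \<longrightarrow> m < 2^(l+t)" by linarith
    then show "(if 2^l > m then dyadic_block (l + t) else 0) \<le> (if 2^(l+t) > m then dyadic_block (l + t) else 0)"
      using dyadic_block_nonneg[of "l+t"] by (auto split: if_splits)
  qed
  also have "\<dots> = (\<Sum>l\<in>{t..<n+t}. if 2^l > m then dyadic_block l else 0)"
    using sum.shift_bounds_nat_ivl[of "\<lambda>l. if 2^l > m then dyadic_block l else 0" 0 t n]
    by (simp add: atLeast0LessThan)
  also have "\<dots> \<le> (\<Sum>l<n+t. if 2^l > m then dyadic_block l else 0)"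
    by (rule sum_mono2) (auto intro: dyadic_block_nonneg)
  also have "\<dots> \<le> tail m" by (rule sum_dyadic_block_le_tail)
  finally show ?thesis .
qed

lemma sum_block_pow2_le_tail: "(\<Sum>l<n. if 2^l > m then block (2^l) else 0) \<le> 3 * tail m"
proof -
  have "(\<Sum>l<n. if 2^l > m then block (2^l) else 0)
     \<le> (\<Sum>l<n. (if 2^l > m then dyadic_block (l + 0) else 0) + (if 2^l > m then dyadic_block (l + 1) else 0) + (if 2^l > m then dyadic_block (l + 2) else 0))"
    using block_pow2_le by (intro sum_mono) auto
  also have "\<dots> = (\<Sum>l<n. if 2^l > m then dyadic_block (l + 0) else 0) + (\<Sum>l<n. if 2^l > m then dyadic_block (l + 1) else 0)
      + (\<Sum>l<n. if 2^l > m then dyadic_block (l + 2) else 0)" by (simp add: sum.distrib)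
  also have "\<dots> \<le> tail m + tail m + tail m" by (intro add_mono sum_dyadic_block_shift_le_tail)
  finally show ?thesis by simp
qed

lemma a_shift_le_block:
  assumes "1 \<le> t" "t \<le> L"
  shows "a (L + t) \<le> 9 * sqrt (real L) * block L"
proof -
  have "0 \<le> block L" unfolding block_def by (intro sum_nonneg b_nonneg)
  have "a (L + t) \<le> 6 * sqrt (real (L + t)) * (\<Sum>k\<in>{L+t+1..3*(L+t)}. b k)"
    using assms by (intro le_sum_b_block) auto
  also have "\<dots> \<le> 6 * (sqrt 2 * sqrt (real L)) * block L"
    unfolding block_def using assms b_nonneg
    by (intro mult_mono mult_left_mono sum_mono2 sum_nonneg) (auto simp: real_sqrt_mult[symmetric])
  also have "\<dots> = (6 * sqrt 2) * (sqrt (real L) * block L)" by (simp add: algebra_simps)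
  also have "\<dots> \<le> 9 * (sqrt (real L) * block L)"
    using sqrt2_bounds \<open>0 \<le> block L\<close> by (intro mult_right_mono) auto
  finally show ?thesis by (simp add: algebra_simps)
qed

lemma average_short_le:
  assumes "1 \<le> L" "L \<le> m"
  shows "(1 / real m) * (\<Sum>i<L. a (i + m + 1) + a (i + 1)) \<le> 36 * real L / sqrt (real m) * tail m"
proof -
  have "(\<Sum>i<L. a (i + m + 1) + a (i + 1)) \<le> (\<Sum>i<L. 12 * sqrt (real (2*m)) * tail m + 12 * sqrt (real (2*m)) * tail m)"
    using assms by (intro sum_mono add_mono le_tail) auto
  also have "\<dots> = 24 * sqrt 2 * real L * sqrt (real m) * tail m"
    by (simp add: real_sqrt_mult)
  finally have "(1 / real m) * (\<Sum>i<L. a (i + m + 1) + a (i + 1))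
      \<le> (1 / real m) * (24 * sqrt 2 * real L * sqrt (real m) * tail m)"
    using assms by (intro mult_left_mono) auto
  also have "\<dots> = 24 * sqrt 2 * real L / sqrt (real m) * tail m"
    using assms by (simp add: field_simps real_sqrt_mult[symmetric])
  also have "\<dots> \<le> 36 * real L / sqrt (real m) * tail m"
    using sqrt2_bounds tail_nonneg by (intro mult_right_mono divide_right_mono) auto
  finally show ?thesis .
qed

lemma average_long_le:
  assumes "1 \<le> m" "m \<le> L"
  shows "(1 / real m) * (\<Sum>t\<in>{1..m}. a (L + t) + a t) \<le> 9 * sqrt (real L) * block L + 12 * sqrt (real m) * tail m"
proof -
  have "(\<Sum>t\<in>{1..m}. a (L + t) + a t) \<le> (\<Sum>t\<in>{1..m}. 9 * sqrt (real L) * block L + 12 * sqrt (real m) * tail m)"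
    using assms by (intro sum_mono add_mono a_shift_le_block le_tail) auto
  then show ?thesis
    using assms by (simp add: field_simps)
qed

text \<open>The two ways of bounding \<open>e L\<close> are used for \<open>2\<^sup>l \<le> m\<close> and \<open>2\<^sup>l > m\<close> respectively.\<close>

lemma sum_pow2_le_tail:
  assumes m: "1 \<le> m"
    and short: "\<And>L. 1 \<le> L \<Longrightarrow> e L \<le> (1 / real m) * (\<Sum>i<L. a (i + m + 1) + a (i + 1))"
    and long: "\<And>L. 1 \<le> L \<Longrightarrow> e L \<le> (1 / real m) * (\<Sum>t\<in>{1..m}. a (L + t) + a t)"
  shows "(\<Sum>l<n. e (2^l) / sqrt (2^l)) \<le> 219 * tail m"
proof -
  have m0: "0 < sqrt (real m)" using m by simp
  have "e (2^l) / sqrt (2^l) \<le> (36 * tail m / sqrt (real m)) * (if 2^l \<le> m then sqrt (2^l) else 0)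
      + 9 * (if m < 2^l then block (2^l) else 0) + (12 * sqrt (real m) * tail m) * (if m < 2^l then 1 / sqrt (2^l) else 0)"
    for l
  proof (cases "2^l \<le> m")
    case True
    have "e (2^l) \<le> 36 * real (2^l) / sqrt (real m) * tail m"
      using short[of "2^l"] average_short_le[of "2^l" m] True by simp
    then have "e (2^l) / sqrt (2^l) \<le> (36 * real (2^l) / sqrt (real m) * tail m) / sqrt (2^l)"
      by (intro divide_right_mono) auto
    also have "\<dots> = (36 * tail m / sqrt (real m)) * sqrt (2^l)"
    proof -
      have "real (2^l) = sqrt (2^l) * sqrt (2^l)" by simp
      then show ?thesis using m0 by (simp add: field_simps)
    qed
    finally show ?thesis using True by simp
  next
    case False
    have "e (2^l) \<le> 9 * sqrt (2^l) * block (2^l) + 12 * sqrt (real m) * tail m"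
      using long[of "2^l"] average_long_le[OF m, of "2^l"] False by simp
    then have "e (2^l) / sqrt (2^l) \<le> (9 * sqrt (2^l) * block (2^l) + 12 * sqrt (real m) * tail m) / sqrt (2^l)"
      by (intro divide_right_mono) auto
    then show ?thesis using False by (simp add: field_simps)
  qed
  then have "(\<Sum>l<n. e (2^l) / sqrt (2^l))
      \<le> (36 * tail m / sqrt (real m)) * (\<Sum>l<n. if 2^l \<le> m then sqrt (2^l) else 0)
        + 9 * (\<Sum>l<n. if m < 2^l then block (2^l) else 0)
        + (12 * sqrt (real m) * tail m) * (\<Sum>l<n. if m < 2^l then 1 / sqrt (2^l) else 0)"
    by (subst sum_distrib_left sum.distrib[symmetric])+ (rule sum_mono)
  also have "\<dots> \<le> (36 * tail m / sqrt (real m)) * (4 * sqrt (real m)) + 9 * (3 * tail m)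
      + (12 * sqrt (real m) * tail m) * (4 / sqrt (real m))"
    using tail_nonneg m0 sum_sqrt_pow2_le[of m n] sum_inverse_sqrt_pow2_le[OF m, of n]
      sum_block_pow2_le_tail[of m n]
    by (intro add_mono mult_left_mono) auto
  also have "\<dots> = 219 * tail m" using m0 by (simp add: field_simps)
  finally show ?thesis .
qed

end


section \<open>Subadditivity of \<open>\<parallel>E\<^sub>0 S\<^sub>k\<parallel>\<close> and the averages \<open>Y\<^sub>k\<^sup>m\<close>\<close>

lemma sum_lessThan_diff:
  fixes f :: "nat \<Rightarrow> real"
  assumes "a \<le> b"
  shows "(\<Sum>i<b. f i) - (\<Sum>i<a. f i) = (\<Sum>i<b-a. f (i + a))"
proof -
  have "(\<Sum>i<b. f i) - (\<Sum>i<a. f i) = (\<Sum>i\<in>{0+a..<(b-a)+a}. f i)"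
    using sum_diff_nat_ivl[of 0 a b f] assms by (simp add: atLeast0LessThan)
  also have "\<dots> = (\<Sum>i<b-a. f (i + a))"
    by (simp only: sum.shift_bounds_nat_ivl atLeast0LessThan)
  finally show ?thesis .
qed

lemma funpow_apply_add: "(f ^^ m) ((f ^^ n) x) = (f ^^ (m + n)) x"
  by (simp add: funpow_add)

lemma (in stationary_filtration) E0_E0_funpow:
  assumes f: "integrable M f"
  shows "AE x in M. E 0 (\<lambda>x. E 0 f ((T ^^ j) x)) x = E 0 (\<lambda>x. f ((T ^^ j) x)) x"
proof -
  have "AE x in M. E 0 (E j (\<lambda>x. f ((T ^^ j) x))) x = E 0 (\<lambda>x. f ((T ^^ j) x)) x"
    by (rule E_tower[OF _ integrable_funpow[OF f]]) simp
  moreover have "AE x in M. E 0 (E j (\<lambda>x. f ((T ^^ j) x))) x = E 0 (\<lambda>x. E 0 f ((T ^^ j) x)) x"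
    using integrable_funpow[OF integrable_E[OF f]] by (intro E_cong[OF E_funpow[OF f]]) auto
  ultimately show ?thesis by eventually_elim simp
qed

context stationary_sequence
begin

definition S :: "nat \<Rightarrow> 'a \<Rightarrow> real" where "S k x = (\<Sum>i<k. Z ((T ^^ i) x))"

lemma square_integrable_S: "square_integrable M (S k)"
  unfolding S_def by (intro square_integrable_sum square_integrable_funpow[OF square_integrable_Z])

lemma integrable_S: "integrable M (S k)"
  by (rule square_integrable_integrable[OF square_integrable_S])

lemma cond_sum_norm_S: "cond_sum_norm M T F0 Z k = L2norm M (E 0 (S k))"
  by (simp add: cond_sum_norm_eq S_def[abs_def])

lemma S_split: "j \<le> k \<Longrightarrow> S k x = S j x + S (k - j) ((T ^^ j) x)"
  using sum_lessThan_diff[of j k "\<lambda>i. Z ((T ^^ i) x)"] by (simp add: S_def funpow_add)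

text \<open>Conditioning on \<open>Fk 0\<close> instead of the larger \<open>Fk j\<close> can only decrease the norm.\<close>

lemma L2norm_E0_funpow_le:
  assumes W: "square_integrable M W"
  shows "L2norm M (E 0 (\<lambda>x. W ((T ^^ j) x))) \<le> L2norm M (E 0 W)"
proof -
  have Wi: "integrable M W" by (rule square_integrable_integrable[OF W])
  have h: "square_integrable M (\<lambda>x. E 0 W ((T ^^ j) x))"
    by (rule square_integrable_funpow[OF square_integrable_E[OF W]])
  have "L2norm M (E 0 (\<lambda>x. W ((T ^^ j) x))) = L2norm M (E 0 (\<lambda>x. E 0 W ((T ^^ j) x)))"
    using E0_E0_funpow[OF Wi, of j] by (intro L2norm_cong_AE) auto
  also have "\<dots> \<le> L2norm M (\<lambda>x. E 0 W ((T ^^ j) x))" by (rule L2norm_E_le[OF h])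
  also have "\<dots> = L2norm M (E 0 W)" by (rule L2norm_funpow) simp
  finally show ?thesis .
qed

lemma cond_sum_norm_subadditive:
  assumes "j < k"
  shows "cond_sum_norm M T F0 Z j \<le> cond_sum_norm M T F0 Z k + cond_sum_norm M T F0 Z (k - j)"
proof -
  have W: "square_integrable M (\<lambda>x. S (k - j) ((T ^^ j) x))"
    by (rule square_integrable_funpow[OF square_integrable_S])
  have "S j = (\<lambda>x. S k x - S (k - j) ((T ^^ j) x))"
    using S_split[of j k] assms by auto
  then have "AE x in M. E 0 (S j) x = E 0 (S k) x - E 0 (\<lambda>x. S (k - j) ((T ^^ j) x)) x"
    using E_diff[OF integrable_S square_integrable_integrable[OF W]] by simp
  then have "L2norm M (E 0 (S j)) = L2norm M (\<lambda>x. E 0 (S k) x - E 0 (\<lambda>x. S (k - j) ((T ^^ j) x)) x)"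
    by (intro L2norm_cong_AE) auto
  also have "\<dots> \<le> L2norm M (E 0 (S k)) + L2norm M (E 0 (\<lambda>x. S (k - j) ((T ^^ j) x)))"
    by (rule L2norm_diff_le[OF square_integrable_E[OF square_integrable_S] square_integrable_E[OF W]])
  also have "L2norm M (E 0 (\<lambda>x. S (k - j) ((T ^^ j) x))) \<le> L2norm M (E 0 (S (k - j)))"
    by (rule L2norm_E0_funpow_le[OF square_integrable_S])
  finally show ?thesis by (simp add: cond_sum_norm_S)
qed

lemma subadditive_norms_cond_sum_norm:
  assumes "summable (\<lambda>k. cond_sum_norm M T F0 Z (Suc k) / real (Suc k) powr (3/2))"
  shows "subadditive_norms (cond_sum_norm M T F0 Z)"
proof
  show "0 \<le> cond_sum_norm M T F0 Z k" for k by (simp add: cond_sum_norm_def)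
qed (rule cond_sum_norm_subadditive, simp, rule assms)

definition fwd_sum :: "nat \<Rightarrow> 'a \<Rightarrow> real" where "fwd_sum m y = (\<Sum>s<m. Z ((T ^^ (s + 1)) y))"

definition Y :: "nat \<Rightarrow> 'a \<Rightarrow> real" where "Y m x = (1 / real m) * E 0 (fwd_sum m) x"

lemma square_integrable_fwd_sum: "square_integrable M (fwd_sum m)"
  unfolding fwd_sum_def by (intro square_integrable_sum square_integrable_funpow[OF square_integrable_Z])

lemma fwd_sum_funpow: "fwd_sum m ((T ^^ i) y) = S (i + m + 1) y - S (i + 1) y"
proof -
  have "S (i + m + 1) y - S (i + 1) y = (\<Sum>s<m. Z ((T ^^ (s + (i + 1))) y))"
    unfolding S_def using sum_lessThan_diff[of "i+1" "i+m+1" "\<lambda>j. Z ((T ^^ j) y)"] by simp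
  also have "\<dots> = fwd_sum m ((T ^^ i) y)"
    unfolding fwd_sum_def by (intro sum.cong refl) (simp add: funpow_apply_add add_ac)
  finally show ?thesis by simp
qed

lemma sum_fwd_sum_funpow: "(\<Sum>i<L. fwd_sum m ((T ^^ i) y)) = (\<Sum>s<m. S (L + s + 1) y - S (s + 1) y)"
proof -
  have "(\<Sum>i<L. fwd_sum m ((T ^^ i) y)) = (\<Sum>i<L. \<Sum>s<m. Z ((T ^^ (i + (s + 1))) y))"
    unfolding fwd_sum_def by (intro sum.cong refl) (simp add: funpow_apply_add add_ac)
  also have "\<dots> = (\<Sum>s<m. \<Sum>i<L. Z ((T ^^ (i + (s + 1))) y))" by (rule sum.swap)
  also have "\<dots> = (\<Sum>s<m. S (L + s + 1) y - S (s + 1) y)"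
  proof (intro sum.cong refl)
    fix s
    show "(\<Sum>i<L. Z ((T ^^ (i + (s + 1))) y)) = S (L + s + 1) y - S (s + 1) y"
      unfolding S_def using sum_lessThan_diff[of "s+1" "L+s+1" "\<lambda>j. Z ((T ^^ j) y)"] by simp
  qed
  finally show ?thesis .
qed

lemma square_integrable_Y: "square_integrable M (Y m)"
  unfolding Y_def by (intro square_integrable_cmult square_integrable_E[OF square_integrable_fwd_sum])

lemma stationary_sequence_Y: "stationary_sequence M T F0 (Y m)"
proof
  have "Y m \<in> borel_measurable (Fk 0)"
    unfolding Y_def by (intro borel_measurable_times borel_measurable_const) simp
  then show "Y m \<in> borel_measurable F0" using measurable_Fk0_iff by simp
qed (rule square_integrable_Y)

lemma Ym_eq_Y_funpow: "AE x in M. Ym M T F0 Z (int k) m x = Y m ((T ^^ k) x)"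
proof -
  have "(\<Sum>i\<in>{1..m}. Xs M T Z (int k + int i) y) = fwd_sum m ((T ^^ k) y)" for y
  proof -
    have "(\<Sum>i\<in>{1..m}. Xs M T Z (int k + int i) y) = (\<Sum>i\<in>{Suc 0..m}. Z ((T ^^ (k + i)) y))"
      by (intro sum.cong) (auto simp: Xs_def Tpow_def nat_add_distrib)
    also have "\<dots> = fwd_sum m ((T ^^ k) y)"
      unfolding sum.atLeast1_atMost_eq fwd_sum_def by (intro sum.cong refl) (simp add: funpow_apply_add add_ac)
    finally show ?thesis .
  qed
  moreover have "AE x in M. E k (\<lambda>y. fwd_sum m ((T ^^ k) y)) x = E 0 (fwd_sum m) ((T ^^ k) x)"
    by (rule E_funpow[OF square_integrable_integrable[OF square_integrable_fwd_sum]])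
  ultimately show ?thesis
    unfolding Ym_def condE_eq_E by (simp add: Y_def[abs_def])
qed

lemma cond_sum_norm_Y:
  "cond_sum_norm M T F0 (Y m) L = (1 / real m) * L2norm M (\<lambda>x. \<Sum>i<L. E 0 (\<lambda>y. fwd_sum m ((T ^^ i) y)) x)"
proof -
  define G where "G = (\<lambda>x. \<Sum>i<L. E 0 (fwd_sum m) ((T ^^ i) x))"
  have V: "integrable M (fwd_sum m)"
    by (rule square_integrable_integrable[OF square_integrable_fwd_sum])
  have G_i: "integrable M (\<lambda>x. E 0 (fwd_sum m) ((T ^^ i) x))" for i
    by (rule integrable_funpow[OF integrable_E[OF V]])
  have "AE x in M. E 0 (\<lambda>x. (1 / real m) * G x) x = (1 / real m) * E 0 G x"
    using G_i by (intro E_cmult) (auto simp: G_def)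
  moreover have "AE x in M. E 0 G x = (\<Sum>i<L. E 0 (\<lambda>x. E 0 (fwd_sum m) ((T ^^ i) x)) x)"
    unfolding G_def by (rule E_sum[OF G_i])
  moreover have "AE x in M. \<forall>i\<in>{..<L}. E 0 (\<lambda>x. E 0 (fwd_sum m) ((T ^^ i) x)) x
      = E 0 (\<lambda>y. fwd_sum m ((T ^^ i) y)) x"
    using E0_E0_funpow[OF V] by (subst AE_finite_all) auto
  ultimately have "AE x in M. E 0 (\<lambda>x. \<Sum>i<L. Y m ((T ^^ i) x)) x
      = (1 / real m) * (\<Sum>i<L. E 0 (\<lambda>y. fwd_sum m ((T ^^ i) y)) x)"
    by eventually_elim (simp add: G_def Y_def sum_divide_distrib)
  then have "cond_sum_norm M T F0 (Y m) L
      = L2norm M (\<lambda>x. (1 / real m) * (\<Sum>i<L. E 0 (\<lambda>y. fwd_sum m ((T ^^ i) y)) x))"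
    unfolding cond_sum_norm_eq by (intro L2norm_cong_AE) auto
  then show ?thesis unfolding L2norm_cmult by simp
qed

lemma cond_sum_norm_Y_short:
  "cond_sum_norm M T F0 (Y m) L
    \<le> (1 / real m) * (\<Sum>i<L. cond_sum_norm M T F0 Z (i + m + 1) + cond_sum_norm M T F0 Z (i + 1))"
proof -
  have "L2norm M (\<lambda>x. \<Sum>i<L. E 0 (\<lambda>y. fwd_sum m ((T ^^ i) y)) x)
      \<le> (\<Sum>i<L. L2norm M (E 0 (\<lambda>y. fwd_sum m ((T ^^ i) y))))"
    by (intro L2norm_sum_le square_integrable_E square_integrable_funpow[OF square_integrable_fwd_sum])
  also have "\<dots> \<le> (\<Sum>i<L. cond_sum_norm M T F0 Z (i + m + 1) + cond_sum_norm M T F0 Z (i + 1))"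
  proof (rule sum_mono)
    fix i
    have "AE x in M. E 0 (\<lambda>y. S (i + m + 1) y - S (i + 1) y) x = E 0 (S (i + m + 1)) x - E 0 (S (i + 1)) x"
      by (rule E_diff[OF integrable_S integrable_S])
    then have "L2norm M (E 0 (\<lambda>y. fwd_sum m ((T ^^ i) y)))
        = L2norm M (\<lambda>x. E 0 (S (i + m + 1)) x - E 0 (S (i + 1)) x)"
      unfolding fwd_sum_funpow by (intro L2norm_cong_AE) auto
    also have "\<dots> \<le> cond_sum_norm M T F0 Z (i + m + 1) + cond_sum_norm M T F0 Z (i + 1)"
      unfolding cond_sum_norm_S by (intro L2norm_diff_le square_integrable_E square_integrable_S)
    finally show "L2norm M (E 0 (\<lambda>y. fwd_sum m ((T ^^ i) y)))
        \<le> cond_sum_norm M T F0 Z (i + m + 1) + cond_sum_norm M T F0 Z (i + 1)" .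
  qed
  finally show ?thesis unfolding cond_sum_norm_Y by (intro mult_left_mono) auto
qed

lemma cond_sum_norm_Y_long:
  "cond_sum_norm M T F0 (Y m) L
    \<le> (1 / real m) * (\<Sum>t\<in>{1..m}. cond_sum_norm M T F0 Z (L + t) + cond_sum_norm M T F0 Z t)"
proof -
  have V: "integrable M (\<lambda>y. fwd_sum m ((T ^^ i) y))" for i
    by (rule integrable_funpow[OF square_integrable_integrable[OF square_integrable_fwd_sum]])
  have D: "integrable M (\<lambda>x. S (L + s + 1) x - S (s + 1) x)" for s
    using integrable_S by auto
  have "AE x in M. E 0 (\<lambda>x. \<Sum>i<L. fwd_sum m ((T ^^ i) x)) x = (\<Sum>i<L. E 0 (\<lambda>y. fwd_sum m ((T ^^ i) y)) x)"
    by (rule E_sum[OF V])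
  moreover have "AE x in M. E 0 (\<lambda>x. \<Sum>s<m. S (L + s + 1) x - S (s + 1) x) x
      = (\<Sum>s<m. E 0 (\<lambda>x. S (L + s + 1) x - S (s + 1) x) x)"
    by (rule E_sum[OF D])
  moreover have "AE x in M. \<forall>s\<in>{..<m}. E 0 (\<lambda>x. S (L + s + 1) x - S (s + 1) x) x
      = E 0 (S (L + s + 1)) x - E 0 (S (s + 1)) x"
    using E_diff[OF integrable_S integrable_S] by (subst AE_finite_all) auto
  ultimately have "AE x in M. (\<Sum>i<L. E 0 (\<lambda>y. fwd_sum m ((T ^^ i) y)) x)
      = (\<Sum>s<m. E 0 (S (L + s + 1)) x - E 0 (S (s + 1)) x)"
    unfolding sum_fwd_sum_funpow by eventually_elim simp
  then have "L2norm M (\<lambda>x. \<Sum>i<L. E 0 (\<lambda>y. fwd_sum m ((T ^^ i) y)) x)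
      = L2norm M (\<lambda>x. \<Sum>s<m. E 0 (S (L + s + 1)) x - E 0 (S (s + 1)) x)"
    by (intro L2norm_cong_AE) auto
  also have "\<dots> \<le> (\<Sum>s<m. cond_sum_norm M T F0 Z (L + s + 1) + cond_sum_norm M T F0 Z (s + 1))"
    unfolding cond_sum_norm_S
    by (intro L2norm_sum_le[THEN order_trans] sum_mono L2norm_diff_le square_integrable_diff
        square_integrable_E square_integrable_S)
  also have "\<dots> = (\<Sum>t\<in>{1..m}. cond_sum_norm M T F0 Z (L + t) + cond_sum_norm M T F0 Z t)"
    by (simp add: sum.atLeast1_atMost_eq)
  finally show ?thesis unfolding cond_sum_norm_Y by (intro mult_left_mono) auto
qed

end


lemma exists_pow2_between: "1 \<le> n \<Longrightarrow> \<exists>r. n \<le> 2^r \<and> 2^r < 2 * (n::nat)"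
proof -
  assume n: "1 \<le> n"
  define r where "r = (LEAST r. n \<le> 2^r)"
  have "n \<le> 2^r" unfolding r_def by (rule LeastI[of _ n]) (simp add: less_imp_le_nat)
  moreover have "2^r < 2 * n"
  proof (cases r)
    case (Suc r')
    then have "\<not> n \<le> 2^r'" unfolding r_def using not_less_Least[of r' "\<lambda>r. n \<le> 2^r"] by simp
    then show ?thesis using Suc by simp
  qed (use n in simp)
  ultimately show ?thesis by blast
qed

text \<open>Dividing the dyadic maximal inequality at scale \<open>2\<^sup>r \<in> [n, 2n)\<close> by \<open>\<surd>n\<close> turns
  every coefficient \<open>\<surd>(2\<^sup>r\<^sup>-\<^sup>l\<^sup>-\<^sup>1)\<close> into at most \<open>1 / \<surd>(2\<^sup>l)\<close>.\<close>

lemma dyadic_bound_normalized: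
  fixes q :: "nat \<Rightarrow> real"
  assumes q: "\<And>l. 0 \<le> q l" and n: "1 \<le> n" and r: "2^r < 2 * n"
    and X: "X \<le> q r + 9 * (\<Sum>l<r. sqrt (2^(r-l-1)) * q l)"
    and B: "(\<Sum>l<Suc r. q l / sqrt (2^l)) \<le> B"
  shows "(1 / sqrt (real n)) * X \<le> 14 * B"
proof -
  define s where "s = sqrt (real n)"
  have s0: "0 < s" using n by (simp add: s_def)
  have "real (2^r) \<le> real (2 * n)" using r by (simp only: of_nat_le_iff)
  then have "sqrt (2^r) \<le> sqrt (2 * real n)" by (intro real_sqrt_le_mono) simp
  then have us: "sqrt (2^r) \<le> sqrt 2 * s" by (simp add: s_def real_sqrt_mult)
  have t1: "(1 / s) * q r \<le> sqrt 2 * (q r / sqrt (2^r))"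
  proof -
    have "(1 / s) * q r = (sqrt (2^r) / s) * (q r / sqrt (2^r))" using s0 by (simp add: field_simps)
    also have "\<dots> \<le> sqrt 2 * (q r / sqrt (2^r))"
      using us s0 q[of r] by (intro mult_right_mono) (auto simp: field_simps)
    finally show ?thesis .
  qed
  have t2: "(1 / s) * (sqrt (2^(r-l-1)) * q l) \<le> q l / sqrt (2^l)" if "l < r" for l
  proof -
    have "(2::real)^(r-l-1) * 2 * 2^l = 2^((r-l-1) + 1 + l)" by (simp add: power_add)
    also have "(r-l-1) + 1 + l = r" using that by simp
    finally have e: "sqrt ((2::real)^(r-l-1)) * sqrt 2 * sqrt (2^l) = sqrt (2^r)"
      by (simp add: real_sqrt_mult[symmetric])
    have "(1 / s) * (sqrt (2^(r-l-1)) * q l) = (sqrt (2^r) / (sqrt 2 * s)) * (q l / sqrt (2^l))"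
      using s0 e[symmetric] by (simp add: field_simps)
    also have "\<dots> \<le> 1 * (q l / sqrt (2^l))"
      using us s0 q[of l] by (intro mult_right_mono) (auto simp: field_simps)
    finally show ?thesis by simp
  qed
  have "(1 / s) * X \<le> (1 / s) * q r + 9 * (\<Sum>l<r. (1 / s) * (sqrt (2^(r-l-1)) * q l))"
    using mult_left_mono[OF X, of "1 / s"] s0 by (simp add: algebra_simps sum_distrib_left)
  also have "\<dots> \<le> sqrt 2 * (q r / sqrt (2^r)) + 9 * (\<Sum>l<r. q l / sqrt (2^l))"
    using t1 t2 by (intro add_mono mult_left_mono sum_mono) auto
  also have "\<dots> \<le> 14 * (q r / sqrt (2^r)) + 14 * (\<Sum>l<r. q l / sqrt (2^l))"
    using sqrt2_bounds q by (intro add_mono mult_right_mono sum_nonneg) auto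
  also have "\<dots> \<le> 14 * B" using B by simp
  finally show ?thesis by (simp add: s_def)
qed

lemma max_sum_norm_mono:
  assumes "1 \<le> n" "n \<le> N" "\<And>i. square_integrable M (\<lambda>x. W ((T ^^ i) x))"
  shows "max_sum_norm M T W n \<le> max_sum_norm M T W N"
proof -
  have "\<bar>max_partial_sums z n\<bar> \<le> \<bar>max_partial_sums z N\<bar>" for z
    using max_partial_sums_mono[OF assms(1,2)] max_partial_sums_nonneg[OF assms(1)]
    by (metis abs_ge_self abs_of_nonneg order_trans)
  then show ?thesis unfolding max_sum_norm_def
    using assms by (intro L2norm_mono AE_I2 square_integrable_max_partial_sums) auto
qed

lemma plus_norm_le_max_partial_sums:
  assumes K: "0 \<le> K" and V: "\<And>k. square_integrable M (V k)"
    and bound: "\<And>n. 1 \<le> n \<Longrightarrow> (1 / sqrt (real n)) * L2norm M (\<lambda>x. max_partial_sums (\<lambda>k. V k x) n) \<le> K"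
  shows "plus_norm M V \<le> ereal K"
proof -
  define L where "L = limsup (\<lambda>n. ereal (integral\<^sup>L M (\<lambda>x. (\<Sum>k<n. V k x)^2) / real n))"
  have "integral\<^sup>L M (\<lambda>x. (\<Sum>k<n. V k x)^2) / real n \<le> K^2" for n
  proof (cases "n = 0")
    case False
    then have n: "1 \<le> n" by simp
    have "\<bar>\<Sum>k<n. z k\<bar> \<le> \<bar>max_partial_sums z n\<bar>" for z
      using abs_partial_sum_le_max_partial_sums[of n n z] n by simp
    then have "L2norm M (\<lambda>x. \<Sum>k<n. V k x) \<le> L2norm M (\<lambda>x. max_partial_sums (\<lambda>k. V k x) n)"
      using n V by (intro L2norm_mono AE_I2 square_integrable_max_partial_sums) auto
    also have "\<dots> \<le> K * sqrt (real n)"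
      using bound[OF n] n by (simp add: field_simps)
    finally have "(L2norm M (\<lambda>x. \<Sum>k<n. V k x))^2 \<le> (K * sqrt (real n))^2"
      by (intro power_mono) auto
    then show ?thesis using n by (simp add: L2norm_power2 power_mult_distrib field_simps)
  qed simp
  then have "L \<le> ereal (K^2)" unfolding L_def by (intro Limsup_bounded) auto
  moreover from this have "real_of_ereal L \<le> K^2"
    by (cases L) auto
  ultimately show ?thesis
    using real_sqrt_le_mono[of "real_of_ereal L" "K^2"] K
    by (auto simp: plus_norm_def L_def[symmetric])
qed

context stationary_sequence
begin

lemma L2norm_Max_Ym_eq:
  "L2norm M (\<lambda>x. Max ((\<lambda>j. \<bar>\<Sum>k<j. Ym M T F0 Z (int k) m x\<bar>) ` {1..n})) = max_sum_norm M T (Y m) n"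
proof -
  have "AE x in M. \<forall>k\<in>{..<n}. Ym M T F0 Z (int k) m x = Y m ((T ^^ k) x)"
    using Ym_eq_Y_funpow by (subst AE_finite_all) auto
  then have "AE x in M. max_partial_sums (\<lambda>k. Ym M T F0 Z (int k) m x) n = max_partial_sums (\<lambda>i. Y m ((T ^^ i) x)) n"
    unfolding max_partial_sums_def by eventually_elim (intro arg_cong[where f = Max] image_cong refl; simp)
  moreover have "Ym M T F0 Z (int k) m \<in> borel_measurable M" for k
    unfolding Ym_def condE_eq_E by measurable
  moreover have "Max ((\<lambda>j. \<bar>\<Sum>k<j. Ym M T F0 Z (int k) m x\<bar>) ` {1..n})
      = max_partial_sums (\<lambda>k. Ym M T F0 Z (int k) m x) n" for x
    by (simp add: max_partial_sums_def)
  ultimately show ?thesis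
    using square_integrable_funpow[OF square_integrable_Y] unfolding max_sum_norm_def
    by (auto intro!: L2norm_cong_AE)
qed

lemma square_integrable_Ym: "square_integrable M (Ym M T F0 Z (int k) m)"
proof (rule square_integrable_bound[OF square_integrable_funpow[OF square_integrable_Y, of m k]])
  show "Ym M T F0 Z (int k) m \<in> borel_measurable M"
    unfolding Ym_def condE_eq_E by measurable
  show "AE x in M. \<bar>Ym M T F0 Z (int k) m x\<bar> \<le> \<bar>Y m ((T ^^ k) x)\<bar>"
    using Ym_eq_Y_funpow[of k m] by eventually_elim simp
qed

lemma max_sum_norm_Y_le_tail:
  assumes summable: "summable (\<lambda>k. cond_sum_norm M T F0 Z (Suc k) / real (Suc k) powr (3/2))"
    and m: "1 \<le> m" and n: "1 \<le> n"
  shows "(1 / sqrt (real n)) * max_sum_norm M T (Y m) n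
    \<le> 3066 * subadditive_norms.tail (cond_sum_norm M T F0 Z) m"
proof -
  interpret subadditive_norms "cond_sum_norm M T F0 Z"
    by (rule subadditive_norms_cond_sum_norm[OF summable])
  obtain r where r: "n \<le> 2^r" "2^r < 2 * n" using exists_pow2_between[OF n] by blast
  let ?q = "\<lambda>l. cond_sum_norm M T F0 (Y m) (2^l)"
  have "max_sum_norm M T (Y m) n \<le> max_sum_norm M T (Y m) (2^r)"
    using n r(1) square_integrable_funpow[OF square_integrable_Y] by (rule max_sum_norm_mono)
  also have "\<dots> \<le> ?q r + 9 * (\<Sum>l<r. sqrt (2^(r-l-1)) * ?q l)"
    by (rule max_sum_norm_pow2_le[OF stationary_sequence_Y])
  finally have X: "max_sum_norm M T (Y m) n \<le> ?q r + 9 * (\<Sum>l<r. sqrt (2^(r-l-1)) * ?q l)" .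
  have "(\<Sum>l<Suc r. ?q l / sqrt (2^l)) \<le> 219 * tail m"
    by (rule sum_pow2_le_tail[OF m cond_sum_norm_Y_short cond_sum_norm_Y_long])
  then have "(1 / sqrt (real n)) * max_sum_norm M T (Y m) n \<le> 14 * (219 * tail m)"
    by (intro dyadic_bound_normalized[OF _ n r(2) X]) (simp_all add: cond_sum_norm_def)
  then show ?thesis by simp
qed

end

theorem mainTheorem3:
  fixes M :: "'a measure" and T :: "'a \<Rightarrow> 'a" and F0 :: "'a measure" and X0 :: "'a \<Rightarrow> real"
  assumes "prob_space M"
    and "bij_betw T (space M) (space M)"
    and "T \<in> M \<rightarrow>\<^sub>M M"
    and "inv_into (space M) T \<in> M \<rightarrow>\<^sub>M M"
    and "distr M M T = M"
    and "subalgebra M F0"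
    and "sets F0 \<subseteq> sets (vimage_algebra (space M) T F0)"
    and "X0 \<in> borel_measurable F0"
    and "integrable M (\<lambda>x. (X0 x)^2)"
    and "integral\<^sup>L M X0 = 0"
    and "summable (\<lambda>k. acoef M T F0 X0 (Suc k))"
  shows "\<exists>C>0. \<forall>n\<ge>1. \<forall>m\<ge>1.
     (1 / sqrt (real n)) *
       L2norm M (\<lambda>x. Max ((\<lambda>j. \<bar>\<Sum>k<j. Ym M T F0 X0 (int k) m x\<bar>) ` {1..n}))
       \<le> C * (\<Sum>i. acoef M T F0 X0 (i + m + 1))
   \<and> plus_norm M (\<lambda>k. Ym M T F0 X0 (int k) m) \<le> ereal (C * (\<Sum>i. acoef M T F0 X0 (i + m)))"
proof -
  have "square_integrable M X0"
    using measurable_from_subalg[OF assms(6,8)] assms(9) by (simp add: square_integrable_def)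
  then interpret stationary_sequence M T F0 X0
    using assms(1,3,5-8)
    by (intro stationary_sequence.intro stationary_filtration.intro stationary_sequence_axioms.intro)
  have summable: "summable (\<lambda>k. cond_sum_norm M T F0 X0 (Suc k) / real (Suc k) powr (3/2))"
    using assms(11) by (simp add: acoef_def cond_sum_norm_def)
  interpret subadditive_norms "cond_sum_norm M T F0 X0"
    by (rule subadditive_norms_cond_sum_norm[OF summable])
  have tail_eq: "tail m = (\<Sum>i. acoef M T F0 X0 (i + m + 1))" for m
    by (simp add: tail_def b_def acoef_def cond_sum_norm_def)
  have max_bound: "(1 / sqrt (real n)) *
      L2norm M (\<lambda>x. Max ((\<lambda>j. \<bar>\<Sum>k<j. Ym M T F0 X0 (int k) m x\<bar>) ` {1..n})) \<le> 3066 * tail m"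
    if "1 \<le> n" "1 \<le> m" for n m
    unfolding L2norm_Max_Ym_eq by (rule max_sum_norm_Y_le_tail[OF summable that(2,1)])
  have plus_bound: "plus_norm M (\<lambda>k. Ym M T F0 X0 (int k) m) \<le> ereal (3066 * tail m)" if "1 \<le> m" for m
    using tail_nonneg max_bound[OF _ that] square_integrable_Ym
    by (intro plus_norm_le_max_partial_sums) (auto simp: max_partial_sums_def)
  have "tail m \<le> (\<Sum>i. acoef M T F0 X0 (i + m))" if "1 \<le> m" for m
    using suminf_split_head[OF summable_tail[of "m - 1"]] b_nonneg[of m] that
    by (simp add: tail_def b_def acoef_def cond_sum_norm_def)
  then have "plus_norm M (\<lambda>k. Ym M T F0 X0 (int k) m) \<le> ereal (3066 * (\<Sum>i. acoef M T F0 X0 (i + m)))"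
    if "1 \<le> m" for m
    using order_trans[OF plus_bound[OF that]] that by simp
  then show ?thesis
    using max_bound unfolding tail_eq by (intro exI[of _ 3066]) auto
qed

end
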